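(* Let $\alpha\in(0,1)$ be irrational with $\alpha=[0;a_1,a_2,\dots]$, and set $a_0=0$. For every $n\ge1$ define a finite block $B_n$ of integers as follows. (1) If $a_n\ge3$: $B_n=(q_{n-2}+q_{n-1},\;2q_{n-1},\;q_n-q_{n-1})$. (2) If $a_n=2$: $B_n=(q_n-q_{n-1})$. (3) If $a_{n-1}\ne1$, $a_n=1$, $a_{n+1}\ge2$: $B_n=(2q_{n-2}+q_{n-1})$ (note $2q_{n-2}+q_{n-1}=q_{n-2}+q_n$). (4) If $r\ge2$ and $a_{n-1}\ne1$, $a_n=a_{n+1}=\dots=a_{n+r-1}=1$, $a_{n+r}\ge2$: the $r$ indices $n,\dots,n+r-1$ of this maximal run of ones together are given the block $(2q_{n-2}+q_{n-1},\;2q_{n-1},\;2q_n,\;\dots,\;2q_{n+r-2},\;2q_{n+r-3}+q_{n+r-2})$. (5) If $a_{n-1}\ne1$ and $a_j=1$ for all $j\ge n$: the indices $j\ge n$ together are given the infinite block $(2q_{n-2}+q_{n-1},\;2q_{n-1},\;2q_n,\;2q_{n+1},\;\dots)$. Then the sequence $\mathfrak Q$ is obtained from the sequence $(a_1,a_2,a_3,\dots)$ by replacing each partial quotient (respectively each maximal run of ones) by the corresponding block and concatenating the blocks in order of increasing index; more precisely, this concatenation, after deleting repeated values, is exactly the increasing enumeration $\mathfrak q_1=1<\mathfrak q_2<\mathfrak q_3<\cdots$ of $\mathfrak Q$.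
   Context: Let $\alpha$ be an irrational real number in $(0,1)$ with continued fraction expansion $\alpha=[0;a_1,a_2,\dots]$ (the $a_i$ positive integers). Convergents: $p_n/q_n=[0;a_1,\dots,a_n]$ for $n\ge1$, with $p_{-1}=1,q_{-1}=0,p_0=0,q_0=1$, so that $q_n=a_nq_{n-1}+q_{n-2}$ and $p_n=a_np_{n-1}+p_{n-2}$. For real $t\ge1$ define $\psi^{[2]}_\alpha(t)=\min\{|q\alpha-p| : p,q\in\mathbb Z,\ 1\le q\le t,\ (p,q)\ne(p_n,q_n)\text{ for all }n\ge0\}$. Let $\mathfrak Q$ be the set consisting of $1$ together with all integers $t\ge2$ such that $\psi^{[2]}_\alpha(t)<\psi^{[2]}_\alpha(t-1)$ (the points of discontinuity of $\psi^{[2]}_\alpha$), enumerated increasingly as $\mathfrak q_1=1<\mathfrak q_2<\cdots$. *)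

theory Defs
  imports Complex_Main "HOL-Library.Infinite_Set"
begin

fun cf_rem :: "real \<Rightarrow> nat \<Rightarrow> real" where
  "cf_rem x 0 = x"
| "cf_rem x (Suc k) = frac (1 / cf_rem x k)"

definition cf_a :: "real \<Rightarrow> nat \<Rightarrow> nat" where
  "cf_a x n = (if n = 0 then 0 else nat \<lfloor>1 / cf_rem x (n - 1)\<rfloor>)"

text \<open>Shifted recurrences: qs a m = q_(m-1), ps a m = p_(m-1).\<close>
fun qs :: "(nat \<Rightarrow> nat) \<Rightarrow> nat \<Rightarrow> int" where
  "qs a 0 = 0"
| "qs a (Suc 0) = 1"
| "qs a (Suc (Suc m)) = int (a (Suc m)) * qs a (Suc m) + qs a m"

fun ps :: "(nat \<Rightarrow> nat) \<Rightarrow> nat \<Rightarrow> int" where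
  "ps a 0 = 1"
| "ps a (Suc 0) = 0"
| "ps a (Suc (Suc m)) = int (a (Suc m)) * ps a (Suc m) + ps a m"

text \<open>q_k and p_k for integer indices k \<ge> -1.\<close>
definition cf_q :: "real \<Rightarrow> int \<Rightarrow> int" where
  "cf_q x k = qs (cf_a x) (nat (k + 1))"

definition cf_p :: "real \<Rightarrow> int \<Rightarrow> int" where
  "cf_p x k = ps (cf_a x) (nat (k + 1))"

definition psi2 :: "real \<Rightarrow> real \<Rightarrow> real" where
  "psi2 x t = Inf {\<bar>real_of_int q * x - real_of_int p\<bar> | p q.
      1 \<le> q \<and> real_of_int q \<le> t \<and> (\<forall>n::nat. (p, q) \<noteq> (cf_p x (int n), cf_q x (int n)))}"

definition frakQ :: "real \<Rightarrow> nat set" where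
  "frakQ x = {1} \<union> {t. 2 \<le> t \<and> psi2 x (real t) < psi2 x (real t - 1)}"

text \<open>blk x n is the finite block attached to index n \<ge> 1 when n starts a block
  (cases (1)-(4)); it is empty at indices inside a run of ones and at the start of an
  infinite run of ones (case (5), handled separately).\<close>
definition blk :: "real \<Rightarrow> nat \<Rightarrow> int list" where
  "blk x n = (let a = cf_a x; q = cf_q x; m = int n in
     if n = 0 then []
     else if a n \<ge> 3 then [q (m - 2) + q (m - 1), 2 * q (m - 1), q m - q (m - 1)]
     else if a n = 2 then [q m - q (m - 1)]
     else if a n = 1 \<and> a (n - 1) \<noteq> 1 \<and> (\<exists>j>n. a j \<noteq> 1) then
       (let r = (LEAST r. a (n + r) \<noteq> 1) in
        if r = 1 then [2 * q (m - 2) + q (m - 1)]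
        else [2 * q (m - 2) + q (m - 1)] @ map (\<lambda>k. 2 * q (m - 1 + int k)) [0..<r]
             @ [2 * q (m + int r - 3) + q (m + int r - 2)])
     else [])"

definition blk_prefix :: "real \<Rightarrow> nat \<Rightarrow> int list" where
  "blk_prefix x N = concat (map (blk x) [1..<Suc N])"

definition inf_blk :: "real \<Rightarrow> nat \<Rightarrow> nat \<Rightarrow> int" where
  "inf_blk x n k = (if k = 0 then 2 * cf_q x (int n - 2) + cf_q x (int n - 1)
                    else 2 * cf_q x (int n + int k - 2))"

text \<open>The full concatenated sequence (indexed from 0).\<close>
definition blockseq :: "real \<Rightarrow> nat \<Rightarrow> int" where
  "blockseq x i = (let a = cf_a x in
     if \<exists>n\<ge>1. a (n - 1) \<noteq> 1 \<and> (\<forall>j\<ge>n. a j = 1) then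
       (let n = (THE n. n \<ge> 1 \<and> a (n - 1) \<noteq> 1 \<and> (\<forall>j\<ge>n. a j = 1));
            L = blk_prefix x (n - 1) in
        if i < length L then L ! i else inf_blk x n (i - length L))
     else blk_prefix x (LEAST N. i < length (blk_prefix x N)) ! i)"

definition first_occ :: "(nat \<Rightarrow> int) \<Rightarrow> nat set" where
  "first_occ S = {i. \<forall>k<i. S k \<noteq> S i}"

end

theory Submission
  imports Defs
begin

text \<open>Write an approximation \<open>(p, q)\<close> in the unimodular basis of two consecutive convergents:
  its denominator is \<open>x q\<^sub>n + y q\<^sub>n\<^sub>+\<^sub>1\<close> and its distance \<open>\<bar>q \<alpha> - p\<bar>\<close> is
  \<open>\<bar>x \<delta>\<^sub>n - y \<delta>\<^sub>n\<^sub>+\<^sub>1\<bar>\<close>. A short case analysis on the signs of \<open>x\<close> and \<open>y\<close> bounds this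
  distance from below for all non-convergents with small denominator. With these bounds, each
  element of a block turns out to be the next record of the best non-convergent approximation
  after its predecessor: its distance is smaller, and no denominator in between does better.
  So the block denominators are exactly the jumps of \<open>\<psi>\<^sup>[\<^sup>2\<^sup>]\<close>, and deleting repetitions
  from their nondecreasing sequence enumerates the set of jumps.\<close>

section \<open>Enumerating first occurrences\<close>

lemma strict_mono_le_of_range_subset:
  fixes f g :: "nat \<Rightarrow> nat"
  assumes f: "strict_mono f" and g: "strict_mono g" and r: "range f \<subseteq> range g"
  shows "g n \<le> f n"
proof -
  have "\<forall>i. \<exists>k. g k = f i" using r by (metis UNIV_I image_iff subsetD rangeI)
  then obtain \<pi> where \<pi>: "\<And>i. g (\<pi> i) = f i" by metis
  have "strict_mono \<pi>"
    unfolding strict_mono_def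
  proof (intro allI impI)
    fix i j :: nat assume "i < j"
    then have "g (\<pi> i) < g (\<pi> j)" using \<pi> f by (simp add: strict_mono_less)
    then show "\<pi> i < \<pi> j" using g by (simp add: strict_mono_less)
  qed
  then have "n \<le> \<pi> n" by (rule strict_mono_imp_increasing)
  then have "g n \<le> g (\<pi> n)" using g by (simp add: strict_mono_less_eq)
  then show ?thesis using \<pi> by simp
qed

lemma strict_mono_eq_of_range_eq:
  fixes f g :: "nat \<Rightarrow> nat"
  assumes "strict_mono f" "strict_mono g" "range f = range g"
  shows "f = g"
proof
  fix n
  show "f n = g n"
    using strict_mono_le_of_range_subset[of f g n] strict_mono_le_of_range_subset[of g f n] assms by simp
qed

lemma least_index_in_first_occ: "(LEAST j. b j = b i) \<in> first_occ b"
  unfolding first_occ_def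
proof (intro CollectI allI impI)
  fix k assume "k < (LEAST j. b j = b i)"
  then have "b k \<noteq> b i" using not_less_Least by blast
  then show "b k \<noteq> b (LEAST j. b j = b i)" using LeastI[of "\<lambda>j. b j = b i" i] by simp
qed

lemma infinite_first_occ:
  fixes b :: "nat \<Rightarrow> int"
  assumes mono: "mono b" and unbounded: "\<And>K. \<exists>i. b i \<ge> K"
  shows "infinite (first_occ b)"
  unfolding infinite_nat_iff_unbounded
proof
  fix N
  obtain i where i: "b i \<ge> b N + 1" using unbounded by blast
  let ?j = "LEAST j. b j = b i"
  have "b ?j = b i" by (rule LeastI) simp
  then have "\<not> ?j \<le> N" using i mono monoD[of b ?j N] by auto
  then show "\<exists>m>N. m \<in> first_occ b" using least_index_in_first_occ by (meson not_le)
qed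

lemma enumerate_first_occ:
  fixes b :: "nat \<Rightarrow> int" and S :: "nat set"
  assumes mono: "mono b" and unbounded: "\<And>K. \<exists>i. b i \<ge> K" and pos: "\<And>i. b i \<ge> 1"
    and S: "S = {t. int t \<in> range b}"
  shows "infinite (first_occ b) \<and> infinite S \<and> (\<forall>k. b (enumerate (first_occ b) k) = int (enumerate S k))"
proof -
  let ?F = "first_occ b"
  have F_inf: "infinite ?F" using infinite_first_occ[OF mono unbounded] .
  let ?e = "enumerate ?F"
  define g where "g k = nat (b (?e k))" for k
  have g: "int (g k) = b (?e k)" for k unfolding g_def using pos[of "?e k"] by simp
  have "strict_mono g"
    unfolding strict_mono_def
  proof (intro allI impI)
    fix k k' :: nat assume "k < k'"
    then have lt: "?e k < ?e k'" using F_inf by (simp add: enumerate_mono)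
    then have "b (?e k) \<le> b (?e k')" using mono by (simp add: monoD)
    moreover have "b (?e k) \<noteq> b (?e k')"
      using enumerate_in_set[OF F_inf, of k'] lt unfolding first_occ_def by blast
    ultimately show "g k < g k'" using g[of k] g[of k'] by simp
  qed
  moreover have range_g: "range g = S"
  proof (intro set_eqI iffI)
    fix t assume "t \<in> range g"
    then obtain k where "t = g k" by auto
    then have "int t = b (?e k)" using g by simp
    then show "t \<in> S" unfolding S by (metis (mono_tags) mem_Collect_eq rangeI)
  next
    fix t assume "t \<in> S"
    then obtain i where i: "int t = b i" unfolding S by auto
    obtain k where "?e k = (LEAST j. b j = b i)"
      using enumerate_Ex[OF F_inf least_index_in_first_occ] by blast
    then have "int (g k) = int t" using g[of k] LeastI[of "\<lambda>j. b j = b i" i] i by simp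
    then show "t \<in> range g" by (metis of_nat_eq_iff rangeI)
  qed
  ultimately have S_inf: "infinite S"
    using strict_mono_imp_inj_on[of g UNIV] finite_imageD[of g UNIV] by auto
  have "enumerate S = g"
    using strict_mono_enumerate[OF S_inf] range_enumerate[OF S_inf] \<open>strict_mono g\<close> range_g
    by (intro strict_mono_eq_of_range_eq) auto
  then show ?thesis using F_inf S_inf g by simp
qed

section \<open>Distances in a basis of two convergents\<close>

text \<open>Three consecutive convergent denominators \<open>q0 \<le> q1 \<le> q2 = A q1 + q0\<close> and the distances
  \<open>d1 > d2 > d3\<close> of the corresponding convergents to \<open>\<alpha>\<close>, with \<open>d1 = B d2 + d3\<close>.
  In the basis of the convergents with denominators \<open>q1, q2\<close>, an approximation with
  denominator \<open>x q1 + y q2\<close> has distance \<open>\<bar>x d1 - y d2\<bar>\<close>; the coordinates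
  \<open>(1,0), (0,1), (-A,1), (1,B)\<close> are the convergents with denominators \<open>q1, q2, q0, q3\<close>.\<close>
locale convergent_frame =
  fixes A B q0 q1 q2 :: int and d1 d2 d3 :: real
  assumes A_ge_1: "A \<ge> 1" and B_ge_1: "B \<ge> 1" and q1_pos: "q1 \<ge> 1" and q0_nonneg: "0 \<le> q0"
    and q0_le_q1: "q0 \<le> q1" and q2_eq: "q2 = A * q1 + q0"
    and d2_pos: "d2 > 0" and d3_pos: "d3 > 0" and d3_lt_d2: "d3 < d2" and d1_eq: "d1 = B * d2 + d3"
begin

definition lin_dist :: "int \<Rightarrow> int \<Rightarrow> real" where
  "lin_dist x y = \<bar>of_int x * d1 - of_int y * d2\<bar>"

lemma d2_lt_d1: "d2 < d1"
proof -
  have "of_int B * d2 \<ge> 1 * d2" using B_ge_1 d2_pos by (intro mult_right_mono) auto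
  then show ?thesis using d1_eq d3_pos by simp
qed

lemma q1_le_q2: "q1 \<le> q2"
proof -
  have "A * q1 \<ge> 1 * q1" using A_ge_1 q1_pos by (intro mult_right_mono) auto
  then show ?thesis using q2_eq q0_nonneg by simp
qed

lemma int_mult_ge: "(k::int) \<le> x \<Longrightarrow> 0 \<le> c \<Longrightarrow> k * c \<le> x * c"
  by (rule mult_right_mono)

lemma real_mult_ge: "(k::int) \<le> x \<Longrightarrow> 0 \<le> (c::real) \<Longrightarrow> of_int k * c \<le> of_int x * c"
  by (rule mult_right_mono) simp_all

lemma coord_cases:
  assumes q: "1 \<le> x * q1 + y * q2"
  obtains "y = 0" "x \<ge> 1" | "y \<le> -1" "x \<ge> A + 1" | "y \<ge> 1" "x \<le> -1" | "y \<ge> 1" "x = 0"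
    | "y \<ge> 1" "x \<ge> 1"
proof -
  consider "y = 0" | "y \<le> -1" | "y \<ge> 1" by linarith
  then show ?thesis
  proof cases
    case 1
    then have "x * q1 \<ge> 1" using q by simp
    then have "x \<ge> 1" using q1_pos by (smt (verit, best) mult_nonpos_nonneg)
    then show ?thesis using 1 that by blast
  next
    case 2
    have "y * q2 \<le> (-1) * q2" using 2 q1_le_q2 q1_pos by (intro int_mult_ge) auto
    then have "x * q1 > A * q1" using q q2_eq q0_nonneg by linarith
    then have "x > A" using q1_pos by (simp add: mult_less_cancel_right)
    then show ?thesis using 2 that by simp
  next
    case 3
    then show ?thesis using that by linarith
  qed
qed

lemma lin_dist_x_axis: "x \<ge> 1 \<Longrightarrow> lin_dist x 0 = of_int x * d1"
  unfolding lin_dist_def using d2_pos d2_lt_d1 by simp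

lemma lin_dist_x_axis_ge: "x \<ge> 2 \<Longrightarrow> lin_dist x 0 \<ge> 2 * d1"
  using real_mult_ge[of 2 x d1] lin_dist_x_axis[of x] d2_pos d2_lt_d1 by simp

lemma lin_dist_same_sign_ge: "y \<le> -1 \<Longrightarrow> x \<ge> k \<Longrightarrow> k \<ge> 0 \<Longrightarrow> lin_dist x y \<ge> of_int k * d1 + d2"
proof -
  assume y: "y \<le> -1" and x: "x \<ge> k" and k: "k \<ge> 0"
  have "of_int x * d1 \<ge> of_int k * d1" using x d2_lt_d1 d2_pos by (intro real_mult_ge) auto
  moreover have "of_int (-y) * d2 \<ge> of_int 1 * d2" using y d2_pos by (intro real_mult_ge) auto
  moreover have "of_int k * d1 \<ge> 0" using k d2_lt_d1 d2_pos by simp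
  ultimately show ?thesis unfolding lin_dist_def by (simp add: algebra_simps)
qed

lemma lin_dist_same_sign_ge2: "y \<le> -1 \<Longrightarrow> x \<ge> A + 1 \<Longrightarrow> lin_dist x y \<ge> 2 * d1 + d2"
  using lin_dist_same_sign_ge[of y 2 x] A_ge_1 by simp

lemma lin_dist_opposite_ge:
  assumes "0 \<le> k" "0 \<le> l" "x \<le> - k" "l \<le> y"
  shows "lin_dist x y \<ge> of_int k * d1 + of_int l * d2"
proof -
  have "of_int (- x) * d1 \<ge> of_int k * d1" using assms d2_lt_d1 d2_pos by (intro real_mult_ge) auto
  moreover have "of_int y * d2 \<ge> of_int l * d2" using assms d2_pos by (intro real_mult_ge) auto
  moreover have "of_int k * d1 \<ge> 0" "of_int l * d2 \<ge> 0" using assms d2_lt_d1 d2_pos by simp_all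
  ultimately show ?thesis unfolding lin_dist_def by (simp add: algebra_simps)
qed

lemma denom_ge_q1_plus_q2: "x \<ge> 1 \<Longrightarrow> y \<ge> 1 \<Longrightarrow> x * q1 + y * q2 \<ge> q1 + q2"
proof -
  assume "x \<ge> 1" "y \<ge> 1"
  then have "x * q1 \<ge> 1 * q1" "y * q2 \<ge> 1 * q2" using q1_pos q1_le_q2 by (intro int_mult_ge; simp)+
  then show ?thesis by simp
qed

lemma lin_dist_below_q2_minus_q1:
  assumes q: "1 \<le> x * q1 + y * q2" and T: "x * q1 + y * q2 < q2 - q1" and nc: "(x, y) \<noteq> (1, 0)"
  shows "lin_dist x y \<ge> 2 * d1"
proof (cases rule: coord_cases[OF q])
  case 1
  then show ?thesis using nc lin_dist_x_axis_ge[of x] by (cases "x = 1") auto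
next
  case 2
  then show ?thesis using lin_dist_same_sign_ge2[of y x] d2_pos by linarith
next
  case 3
  have "y * q2 \<ge> 1 * q2" using 3 q1_le_q2 q1_pos by (intro int_mult_ge) auto
  then have "x \<noteq> -1" using 3 T by auto
  then show ?thesis using lin_dist_opposite_ge[of 2 1 x y] 3 d2_pos by simp
next
  case 4
  have "y * q2 \<ge> 1 * q2" using 4 q1_le_q2 q1_pos by (intro int_mult_ge) auto
  then show ?thesis using T 4 q1_pos by simp
next
  case 5
  then show ?thesis using denom_ge_q1_plus_q2[of x y] T q1_pos by linarith
qed

lemma lin_dist_below_2q1:
  assumes A: "A \<ge> 2" and q: "1 \<le> x * q1 + y * q2" and T: "x * q1 + y * q2 < 2 * q1"
    and nc: "(x, y) \<noteq> (1, 0)"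
  shows "lin_dist x y \<ge> of_int (A - 1) * d1 + d2"
proof (cases rule: coord_cases[OF q])
  case 1
  moreover have "x \<ge> 2 \<Longrightarrow> x * q1 \<ge> 2 * q1" using q1_pos by (intro int_mult_ge) auto
  ultimately show ?thesis using nc T by (cases "x = 1") auto
next
  case 2
  then show ?thesis using lin_dist_same_sign_ge[of y "A - 1" x] A by simp
next
  case 3
  have "y * q2 \<ge> 1 * q2" using 3 q1_le_q2 q1_pos by (intro int_mult_ge) auto
  moreover have "A * q1 \<ge> 2 * q1" using A q1_pos by (intro int_mult_ge) auto
  ultimately have "(- x) * q1 > (A - 2) * q1" using T q2_eq q0_nonneg by (simp add: algebra_simps)
  then have "- x > A - 2" using q1_pos mult_right_less_imp_less[of "A - 2" q1 "- x"] by simp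
  then show ?thesis using lin_dist_opposite_ge[of "A - 1" 1 x y] 3 A by simp
next
  case 4
  have "y * q2 \<ge> 1 * q2" using 4 q1_le_q2 q1_pos by (intro int_mult_ge) auto
  moreover have "A * q1 \<ge> 2 * q1" using A q1_pos by (intro int_mult_ge) auto
  ultimately show ?thesis using T 4 q2_eq q0_nonneg by simp
next
  case 5
  have "A * q1 \<ge> 2 * q1" using A q1_pos by (intro int_mult_ge) auto
  then show ?thesis using denom_ge_q1_plus_q2[of x y] 5 T q2_eq q0_nonneg q1_pos by linarith
qed

lemma lin_dist_below_q1_plus_q2:
  assumes q: "1 \<le> x * q1 + y * q2" and T: "x * q1 + y * q2 < q1 + q2"
    and nc: "(x, y) \<noteq> (1, 0)" "(x, y) \<noteq> (0, 1)"
  shows "lin_dist x y \<ge> d1 + d2"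
proof (cases rule: coord_cases[OF q])
  case 1
  then show ?thesis using nc lin_dist_x_axis_ge[of x] d2_lt_d1 by (cases "x = 1") auto
next
  case 2
  then show ?thesis using lin_dist_same_sign_ge2[of y x] d2_lt_d1 d2_pos by linarith
next
  case 3
  then show ?thesis using lin_dist_opposite_ge[of 1 1 x y] by simp
next
  case 4
  have "y \<ge> 2 \<Longrightarrow> y * q2 \<ge> 2 * q2" using q1_le_q2 q1_pos by (intro int_mult_ge) auto
  then show ?thesis using T 4 q1_le_q2 nc by (cases "y = 1") auto
next
  case 5
  then show ?thesis using denom_ge_q1_plus_q2[of x y] T by linarith
qed

lemma lin_dist_below_q2_plus_2q1:
  assumes A: "A \<ge> 2" and B: "B = 1" and q: "1 \<le> x * q1 + y * q2" and T: "x * q1 + y * q2 < q2 + 2 * q1"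
    and nc: "(x, y) \<noteq> (1, 0)" "(x, y) \<noteq> (0, 1)" "(x, y) \<noteq> (1, B)"
  shows "lin_dist x y \<ge> d1 + d2"
proof (cases rule: coord_cases[OF q])
  case 1
  then show ?thesis using nc lin_dist_x_axis_ge[of x] d2_lt_d1 by (cases "x = 1") auto
next
  case 2
  then show ?thesis using lin_dist_same_sign_ge2[of y x] d2_lt_d1 d2_pos by linarith
next
  case 3
  then show ?thesis using lin_dist_opposite_ge[of 1 1 x y] by simp
next
  case 4
  have "y \<ge> 2 \<Longrightarrow> y * q2 \<ge> 2 * q2" using q1_le_q2 q1_pos by (intro int_mult_ge) auto
  moreover have "A * q1 \<ge> 2 * q1" using A q1_pos by (intro int_mult_ge) auto
  ultimately show ?thesis using T 4 q2_eq q0_nonneg nc by (cases "y = 1") auto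
next
  case 5
  have "x * q1 \<ge> 1 * q1" "y * q2 \<ge> 1 * q2" using 5 q1_pos q1_le_q2 by (intro int_mult_ge; simp)+
  moreover have "x \<ge> 2 \<or> y \<ge> 2" using 5 nc B by auto
  moreover have "x \<ge> 2 \<Longrightarrow> x * q1 \<ge> 2 * q1" "y \<ge> 2 \<Longrightarrow> y * q2 \<ge> 2 * q2"
    using q1_pos q1_le_q2 by (intro int_mult_ge; simp)+
  ultimately show ?thesis using T q1_le_q2 by linarith
qed

lemma lin_dist_below_q1_plus_q2_of_A1:
  assumes A: "A = 1" and B: "B \<ge> 2" and q: "1 \<le> x * q1 + y * q2" and T: "x * q1 + y * q2 < q1 + q2"
    and nc: "(x, y) \<noteq> (1, 0)" "(x, y) \<noteq> (0, 1)" "(x, y) \<noteq> (- A, 1)"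
  shows "lin_dist x y \<ge> d1 + 2 * d2"
proof (cases rule: coord_cases[OF q])
  case 1
  have "of_int B * d2 \<ge> of_int 2 * d2" using B d2_pos by (intro real_mult_ge) auto
  then have "d1 \<ge> 2 * d2" using d1_eq d3_pos by simp
  then show ?thesis using 1 nc lin_dist_x_axis_ge[of x] by (cases "x = 1") auto
next
  case 2
  then show ?thesis using lin_dist_same_sign_ge2[of y x] d2_lt_d1 d2_pos by linarith
next
  case 3
  then have "x \<le> -2 \<or> y \<ge> 2" using nc A by auto
  then show ?thesis
    using 3 lin_dist_opposite_ge[of 2 1 x y] lin_dist_opposite_ge[of 1 2 x y] d2_lt_d1 d2_pos by auto
next
  case 4
  have "y \<ge> 2 \<Longrightarrow> y * q2 \<ge> 2 * q2" using q1_le_q2 q1_pos by (intro int_mult_ge) auto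
  then show ?thesis using T 4 q1_le_q2 nc by (cases "y = 1") auto
next
  case 5
  then show ?thesis using denom_ge_q1_plus_q2[of x y] T by linarith
qed

lemma lin_dist_below_2q1_of_A1:
  assumes A: "A = 1" and q: "1 \<le> x * q1 + y * q2" and T: "x * q1 + y * q2 < 2 * q1"
    and nc: "(x, y) \<noteq> (1, 0)" "(x, y) \<noteq> (0, 1)" "(x, y) \<noteq> (- A, 1)"
  shows "lin_dist x y \<ge> d1 + 2 * d2"
proof (cases rule: coord_cases[OF q])
  case 1
  moreover have "x \<ge> 2 \<Longrightarrow> x * q1 \<ge> 2 * q1" using q1_pos by (intro int_mult_ge) auto
  ultimately show ?thesis using nc T by (cases "x = 1") auto
next
  case 2
  then show ?thesis using lin_dist_same_sign_ge2[of y x] d2_lt_d1 d2_pos by linarith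
next
  case 3
  then have "x \<le> -2 \<or> y \<ge> 2" using nc A by auto
  then show ?thesis
    using 3 lin_dist_opposite_ge[of 2 1 x y] lin_dist_opposite_ge[of 1 2 x y] d2_lt_d1 d2_pos by auto
next
  case 4
  have "y \<ge> 2 \<Longrightarrow> y * q2 \<ge> 2 * q2" using q1_le_q2 q1_pos by (intro int_mult_ge) auto
  then show ?thesis using T 4 q1_le_q2 nc by (cases "y = 1") auto
next
  case 5
  then show ?thesis using denom_ge_q1_plus_q2[of x y] T q1_le_q2 by simp
qed

lemma lin_dist_below_2q2:
  assumes A: "A = 1" and B: "B = 1" and q: "1 \<le> x * q1 + y * q2" and T: "x * q1 + y * q2 < 2 * q2"
    and nc: "(x, y) \<noteq> (1, 0)" "(x, y) \<noteq> (0, 1)" "(x, y) \<noteq> (- A, 1)" "(x, y) \<noteq> (1, B)"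
  shows "lin_dist x y \<ge> 2 * d1"
proof (cases rule: coord_cases[OF q])
  case 1
  then show ?thesis using nc lin_dist_x_axis_ge[of x] by (cases "x = 1") auto
next
  case 2
  then show ?thesis using lin_dist_same_sign_ge2[of y x] d2_pos by linarith
next
  case 3
  have "d1 < 2 * d2" using d1_eq B d3_lt_d2 by simp
  moreover have "x \<le> -2 \<or> y \<ge> 2" using 3 nc A by auto
  ultimately show ?thesis
    using 3 lin_dist_opposite_ge[of 2 1 x y] lin_dist_opposite_ge[of 1 2 x y] d2_pos by auto
next
  case 4
  have "y \<ge> 2 \<Longrightarrow> y * q2 \<ge> 2 * q2" using q1_le_q2 q1_pos by (intro int_mult_ge) auto
  then show ?thesis using T 4 q1_le_q2 nc by (cases "y = 1") auto
next
  case 5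
  have "x * q1 \<ge> 1 * q1" "y * q2 \<ge> 1 * q2" using 5 q1_pos q1_le_q2 by (intro int_mult_ge; simp)+
  moreover have "x \<ge> 2 \<or> y \<ge> 2" using 5 nc B by auto
  moreover have "x \<ge> 2 \<Longrightarrow> x * q1 \<ge> 2 * q1" "y \<ge> 2 \<Longrightarrow> y * q2 \<ge> 2 * q2"
    using q1_pos q1_le_q2 by (intro int_mult_ge; simp)+
  moreover have "q2 = q1 + q0" using q2_eq A by simp
  ultimately show ?thesis using T q0_le_q1 q1_pos by linarith
qed

lemma lin_dist_below_q2_plus_q0:
  assumes A: "A = 1" and q: "1 \<le> x * q1 + y * q2" and T: "x * q1 + y * q2 < q2 + q0"
    and nc: "(x, y) \<noteq> (1, 0)" "(x, y) \<noteq> (0, 1)" "(x, y) \<noteq> (- A, 1)"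
  shows "lin_dist x y \<ge> 2 * d1"
proof (cases rule: coord_cases[OF q])
  case 1
  then show ?thesis using nc lin_dist_x_axis_ge[of x] by (cases "x = 1") auto
next
  case 2
  then show ?thesis using lin_dist_same_sign_ge2[of y x] d2_pos by linarith
next
  case 3
  have "y \<ge> 2 \<Longrightarrow> y * q2 \<ge> 2 * q2" using q1_le_q2 q1_pos by (intro int_mult_ge) auto
  then have "x \<noteq> -1" using nc T 3 A q2_eq by (cases "y = 1") auto
  then show ?thesis using lin_dist_opposite_ge[of 2 1 x y] 3 d2_pos by simp
next
  case 4
  have "y \<ge> 2 \<Longrightarrow> y * q2 \<ge> 2 * q2" using q1_le_q2 q1_pos by (intro int_mult_ge) auto
  then show ?thesis using T 4 q1_le_q2 q0_le_q1 nc by (cases "y = 1") auto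
next
  case 5
  then show ?thesis using denom_ge_q1_plus_q2[of x y] T q0_le_q1 by simp
qed

end

section \<open>Convergents\<close>

lemma qs_nonneg: "qs f m \<ge> 0"
  by (induction f m rule: qs.induct) auto

locale irrational_cf =
  fixes \<alpha> :: real
  assumes alpha_pos: "0 < \<alpha>" and alpha_lt_1: "\<alpha> < 1" and alpha_irrational: "\<alpha> \<notin> \<rat>"
begin

text \<open>With the index shift of \<^const>\<open>qs\<close>, \<open>Q m\<close> and \<open>P m\<close> are \<open>q\<^sub>m\<^sub>-\<^sub>1\<close> and \<open>p\<^sub>m\<^sub>-\<^sub>1\<close>,
  and \<open>eps m\<close>, \<open>delta m\<close> are the signed and absolute errors of that convergent.\<close>
abbreviation "a \<equiv> cf_a \<alpha>"
abbreviation "Q \<equiv> qs (cf_a \<alpha>)"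
abbreviation "P \<equiv> ps (cf_a \<alpha>)"
abbreviation "rem \<equiv> cf_rem \<alpha>"

definition eps :: "nat \<Rightarrow> real" where "eps m = of_int (Q m) * \<alpha> - of_int (P m)"
definition delta :: "nat \<Rightarrow> real" where "delta m = \<bar>eps m\<bar>"

lemma rem_unit_irrational: "0 < rem k \<and> rem k < 1 \<and> rem k \<notin> \<rat>"
proof (induction k)
  case 0
  then show ?case using alpha_pos alpha_lt_1 alpha_irrational by simp
next
  case (Suc k)
  let ?y = "1 / rem k"
  have "?y \<notin> \<rat>"
  proof
    assume "?y \<in> \<rat>"
    then have "1 / ?y \<in> \<rat>" by (rule Rats_divide[OF Rats_1])
    then show False using Suc by simp
  qed
  moreover have "?y = frac ?y + of_int \<lfloor>?y\<rfloor>" by (simp add: frac_def)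
  ultimately have irr: "frac ?y \<notin> \<rat>" by (metis Rats_add Rats_of_int)
  then have "frac ?y \<noteq> 0" by (metis Rats_0)
  then have "frac ?y > 0" using frac_ge_0[of ?y] by linarith
  then show ?case using irr frac_lt_1[of ?y] by simp
qed

lemma rem_pos: "0 < rem k" and rem_lt_1: "rem k < 1"
  using rem_unit_irrational by auto

lemma a_Suc: "a (Suc k) = nat \<lfloor>1 / rem k\<rfloor>"
  by (simp add: cf_a_def)

lemma floor_inv_rem_ge_1: "\<lfloor>1 / rem k\<rfloor> \<ge> 1"
  using rem_pos[of k] rem_lt_1[of k] by simp

lemma a_0: "a 0 = 0"
  by (simp add: cf_a_def)

lemma a_pos: "n \<ge> 1 \<Longrightarrow> a n \<ge> 1"
  using nat_mono[OF floor_inv_rem_ge_1[of "n - 1"]] by (cases n) (auto simp: a_Suc)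

lemma inv_rem_eq: "1 / rem k = of_nat (a (Suc k)) + rem (Suc k)"
proof -
  have "of_nat (a (Suc k)) = real_of_int \<lfloor>1 / rem k\<rfloor>"
    unfolding a_Suc by (rule of_nat_nat) (use floor_inv_rem_ge_1[of k] in linarith)
  then show ?thesis by (simp add: frac_def)
qed

lemma eps_0: "eps 0 = -1"
  by (simp add: eps_def)

lemma eps_rec: "eps (Suc (Suc m)) = of_nat (a (Suc m)) * eps (Suc m) + eps m"
  by (simp add: eps_def algebra_simps)

lemma eps_Suc: "eps (Suc k) = - rem k * eps k"
proof (induction k)
  case 0
  then show ?case by (simp add: eps_def)
next
  case (Suc j)
  have ej: "eps j = - eps (Suc j) / rem j" using Suc rem_pos[of j] by (simp add: field_simps)
  have "eps (Suc (Suc j)) = of_nat (a (Suc j)) * eps (Suc j) + eps j" by (rule eps_rec)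
  also have "\<dots> = eps (Suc j) * (of_nat (a (Suc j)) - 1 / rem j)" using ej by (simp add: algebra_simps)
  also have "\<dots> = - rem (Suc j) * eps (Suc j)"
  proof -
    have "of_nat (a (Suc j)) - 1 / rem j = - rem (Suc j)" using inv_rem_eq[of j] by linarith
    then show ?thesis by simp
  qed
  finally show ?case .
qed

lemma delta_Suc: "delta (Suc k) = rem k * delta k"
  using eps_Suc[of k] rem_pos[of k] by (simp add: delta_def abs_mult)

lemma delta_0: "delta 0 = 1"
  by (simp add: delta_def eps_0)

lemma delta_pos: "delta m > 0"
  by (induction m) (auto simp: delta_0 delta_Suc rem_pos)

lemma delta_Suc_less: "delta (Suc m) < delta m"
  using delta_Suc[of m] rem_lt_1[of m] delta_pos[of m] by simp

lemma eps_eq_sign_delta: "eps m = (-1) ^ Suc m * delta m"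
proof (induction m)
  case (Suc m)
  have "eps (Suc m) = - rem m * eps m" by (rule eps_Suc)
  also have "\<dots> = (-1) ^ Suc (Suc m) * (rem m * delta m)" using Suc by simp
  finally show ?case using delta_Suc by simp
qed (simp add: eps_0 delta_0)

lemma delta_rec: "delta m = of_nat (a (Suc m)) * delta (Suc m) + delta (Suc (Suc m))"
proof -
  have "(-1) ^ Suc m * (delta (Suc (Suc m)) + of_nat (a (Suc m)) * delta (Suc m) - delta m) = (0::real)"
    using eps_rec[of m] by (simp add: eps_eq_sign_delta algebra_simps)
  then show ?thesis by simp
qed

lemma delta_rec': "n \<ge> 1 \<Longrightarrow> delta (n - 1) = of_nat (a n) * delta n + delta (Suc n)"
  using delta_rec[of "n - 1"] by simp

lemma convergent_det: "P m * Q (Suc m) - P (Suc m) * Q m = (-1) ^ m"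
proof (induction m)
  case (Suc m)
  have "P (Suc m) * Q (Suc (Suc m)) - P (Suc (Suc m)) * Q (Suc m)
        = - (P m * Q (Suc m) - P (Suc m) * Q m)" by (simp add: algebra_simps)
  then show ?case using Suc by simp
qed simp

lemma convergent_coords:
  fixes p q :: int
  obtains x y where "p = x * P m + y * P (Suc m)" "q = x * Q m + y * Q (Suc m)"
    "\<bar>of_int q * \<alpha> - of_int p\<bar> = \<bar>of_int x * delta m - of_int y * delta (Suc m)\<bar>"
proof -
  let ?d = "(-1::int) ^ m"
  define x where "x = ?d * (p * Q (Suc m) - q * P (Suc m))"
  define y where "y = ?d * (q * P m - p * Q m)"
  have dd: "?d * ?d = 1" by (simp flip: power_add add: power_even_eq)
  have D: "P m * Q (Suc m) - P (Suc m) * Q m = ?d" by (rule convergent_det)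
  have "x * P m + y * P (Suc m) = ?d * p * (P m * Q (Suc m) - P (Suc m) * Q m)"
    by (simp add: x_def y_def algebra_simps)
  also have "\<dots> = p" using D dd by (simp add: algebra_simps)
  finally have hp: "p = x * P m + y * P (Suc m)" by simp
  have "x * Q m + y * Q (Suc m) = ?d * q * (P m * Q (Suc m) - P (Suc m) * Q m)"
    by (simp add: x_def y_def algebra_simps)
  also have "\<dots> = q" using D dd by (simp add: algebra_simps)
  finally have hq: "q = x * Q m + y * Q (Suc m)" by simp
  have "of_int q * \<alpha> - of_int p = of_int x * eps m + of_int y * eps (Suc m)"
    by (simp add: hp hq eps_def algebra_simps)
  also have "\<dots> = (-1) ^ Suc m * (of_int x * delta m - of_int y * delta (Suc m))"
    by (simp add: eps_eq_sign_delta algebra_simps)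
  finally have "\<bar>of_int q * \<alpha> - of_int p\<bar> = \<bar>of_int x * delta m - of_int y * delta (Suc m)\<bar>"
    by (simp add: abs_mult)
  then show ?thesis using that hp hq by blast
qed

lemma Q_rec: "m \<ge> 1 \<Longrightarrow> Q (Suc m) = int (a m) * Q m + Q (m - 1)"
  by (cases m) auto

lemma P_rec: "m \<ge> 1 \<Longrightarrow> P (Suc m) = int (a m) * P m + P (m - 1)"
  by (cases m) auto

lemma Q_le_Suc: "Q m \<le> Q (Suc m)"
proof (cases m)
  case (Suc k)
  have "int (a (Suc k)) * Q (Suc k) \<ge> 1 * Q (Suc k)"
    using a_pos[of "Suc k"] qs_nonneg[of a "Suc k"] by (intro mult_right_mono) auto
  then show ?thesis using Suc qs_nonneg[of a k] by simp
qed simp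

lemma Q_mono: "m \<le> n \<Longrightarrow> Q m \<le> Q n"
  by (induction n rule: dec_induct) (auto intro: order.trans[OF _ Q_le_Suc])

lemma Q_pos: "m \<ge> 1 \<Longrightarrow> Q m \<ge> 1"
  using Q_mono[of 1 m] by simp

lemma Q_less_Suc: "m \<ge> 2 \<Longrightarrow> Q m < Q (Suc m)"
proof -
  assume m: "m \<ge> 2"
  have "int (a m) * Q m \<ge> 1 * Q m"
    using a_pos[of m] m qs_nonneg[of a m] by (intro mult_right_mono) auto
  moreover have "Q (m - 1) \<ge> 1" using Q_pos[of "m - 1"] m by simp
  ultimately show ?thesis using Q_rec[of m] m by simp
qed

lemma Q_not_between: "Q j < q \<Longrightarrow> q < Q (Suc j) \<Longrightarrow> q \<noteq> Q k"
proof
  assume "Q j < q" "q < Q (Suc j)" "q = Q k"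
  then show False using Q_mono[of k j] Q_mono[of "Suc j" k] by (cases "k \<le> j") simp_all
qed

lemma Q_ge_index: "Q m \<ge> int m - 1"
proof (induction m rule: less_induct)
  case (less m)
  show ?case
  proof (cases "m \<le> 2")
    case True
    then show ?thesis using Q_pos[of m] by (cases "m = 0") auto
  next
    case False
    then have "Q (m - 1) < Q m" using Q_less_Suc[of "m - 1"] by simp
    moreover have "Q (m - 1) \<ge> int (m - 1) - 1" using less[of "m - 1"] False by simp
    ultimately show ?thesis using False by linarith
  qed
qed

lemma Q_eq_1_cases: "Q k = 1 \<Longrightarrow> k = 1 \<or> (k = 2 \<and> a 1 = 1)"
proof -
  assume h: "Q k = 1"
  have "k \<noteq> 0" using h by (cases k) auto
  moreover have "\<not> k \<ge> 3"
  proof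
    assume "k \<ge> 3"
    then have "Q 2 < Q 3" "Q 3 \<le> Q k" using Q_less_Suc[of 2] Q_mono[of 3 k] by auto
    moreover have "Q 2 \<ge> 1" using Q_pos[of 2] by simp
    ultimately show False using h by (simp add: numeral_eq_Suc)
  qed
  moreover have "k = 2 \<Longrightarrow> a 1 = 1" using h by (simp add: numeral_eq_Suc)
  ultimately show ?thesis by (cases "k = 1"; cases "k = 2") auto
qed

end

section \<open>Lower bounds for non-convergents\<close>

context irrational_cf
begin

definition nonconvergent :: "int \<Rightarrow> int \<Rightarrow> bool" where
  "nonconvergent p q \<longleftrightarrow> (\<forall>n. (p, q) \<noteq> (P (Suc n), Q (Suc n)))"

definition approx_dist :: "int \<times> int \<Rightarrow> real" where
  "approx_dist w = \<bar>of_int (snd w) * \<alpha> - of_int (fst w)\<bar>"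

definition admissible :: "int \<times> int \<Rightarrow> bool" where
  "admissible w \<longleftrightarrow> nonconvergent (fst w) (snd w) \<and> 1 \<le> snd w"

definition dist_bound_below :: "int \<Rightarrow> real \<Rightarrow> bool" where
  "dist_bound_below T E \<longleftrightarrow>
     (\<forall>p q. nonconvergent p q \<longrightarrow> 1 \<le> q \<longrightarrow> q < T \<longrightarrow> E \<le> \<bar>of_int q * \<alpha> - of_int p\<bar>)"

definition next_record :: "int \<times> int \<Rightarrow> int \<times> int \<Rightarrow> bool" where
  "next_record w w' \<longleftrightarrow>
     snd w \<le> snd w' \<and> approx_dist w' < approx_dist w \<and> dist_bound_below (snd w') (approx_dist w)"

lemma frame_at:
  "m \<ge> 1 \<Longrightarrow> convergent_frame (int (a m)) (int (a (Suc m))) (Q (m - 1)) (Q m) (Q (Suc m))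
     (delta m) (delta (Suc m)) (delta (Suc (Suc m)))"
  using a_pos[of m] a_pos[of "Suc m"] Q_pos[of m] qs_nonneg[of a "m - 1"]
    Q_mono[of "m - 1" m] Q_rec[of m] delta_pos[of "Suc m"] delta_pos[of "Suc (Suc m)"]
    delta_Suc_less[of "Suc m"] delta_rec[of m]
  by unfold_locales auto

text \<open>The four excluded coordinate pairs are the convergents \<open>Q m\<close>, \<open>Q (m + 1)\<close>,
  \<open>Q (m - 1)\<close>, \<open>Q (m + 2)\<close>; for \<open>m = 1\<close> the third one has denominator \<open>0\<close>.\<close>
lemma dist_bound_belowI:
  assumes m: "m \<ge> 1"
    and bound: "\<And>x y. 1 \<le> x * Q m + y * Q (Suc m) \<Longrightarrow> x * Q m + y * Q (Suc m) < T \<Longrightarrow>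
      (x, y) \<noteq> (1, 0) \<Longrightarrow> (x, y) \<noteq> (0, 1) \<Longrightarrow> (x, y) \<noteq> (- int (a m), 1) \<Longrightarrow>
      (x, y) \<noteq> (1, int (a (Suc m))) \<Longrightarrow> E \<le> \<bar>of_int x * delta m - of_int y * delta (Suc m)\<bar>"
  shows "dist_bound_below T E"
  unfolding dist_bound_below_def
proof (intro allI impI)
  fix p q assume nc: "nonconvergent p q" and q: "1 \<le> q" and T: "q < T"
  obtain x y where hp: "p = x * P m + y * P (Suc m)" and hq: "q = x * Q m + y * Q (Suc m)"
    and dist: "\<bar>of_int q * \<alpha> - of_int p\<bar> = \<bar>of_int x * delta m - of_int y * delta (Suc m)\<bar>"
    by (rule convergent_coords)
  have conv: "\<not> nonconvergent (P (Suc n)) (Q (Suc n))" for n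
    unfolding nonconvergent_def by blast
  have "(x, y) \<noteq> (1, 0)"
    using nc conv[of "m - 1"] hp hq m by auto
  moreover have "(x, y) \<noteq> (0, 1)"
    using nc conv[of m] hp hq by auto
  moreover have "(x, y) \<noteq> (- int (a m), 1)"
  proof
    assume "(x, y) = (- int (a m), 1)"
    then have pq: "p = P (m - 1)" "q = Q (m - 1)" using hp hq P_rec[OF m] Q_rec[OF m] by auto
    then have "m \<noteq> 1" using q by auto
    then have "(p, q) = (P (Suc (m - 2)), Q (Suc (m - 2)))" using pq m
      by (simp add: Suc_diff_Suc numeral_2_eq_2)
    then show False using nc conv[of "m - 2"] by simp
  qed
  moreover have "(x, y) \<noteq> (1, int (a (Suc m)))"
    using nc conv[of "Suc m"] hp hq by (auto simp: algebra_simps)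
  ultimately show "E \<le> \<bar>of_int q * \<alpha> - of_int p\<bar>"
    unfolding dist using bound q T hq by simp
qed

lemma dist_bound_below_diff:
  assumes m: "m \<ge> 1"
  shows "dist_bound_below (Q (Suc m) - Q m) (2 * delta m)"
proof -
  interpret F: convergent_frame "int (a m)" "int (a (Suc m))" "Q (m - 1)" "Q m" "Q (Suc m)"
    "delta m" "delta (Suc m)" "delta (Suc (Suc m))" by (rule frame_at[OF m])
  show ?thesis
    by (rule dist_bound_belowI[OF m]) (use F.lin_dist_below_q2_minus_q1 in \<open>auto simp: F.lin_dist_def\<close>)
qed

lemma dist_bound_below_double:
  assumes m: "m \<ge> 1" and A: "a m \<ge> 2"
  shows "dist_bound_below (2 * Q m) (of_int (int (a m) - 1) * delta m + delta (Suc m))"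
proof -
  interpret F: convergent_frame "int (a m)" "int (a (Suc m))" "Q (m - 1)" "Q m" "Q (Suc m)"
    "delta m" "delta (Suc m)" "delta (Suc (Suc m))" by (rule frame_at[OF m])
  show ?thesis
    by (rule dist_bound_belowI[OF m]) (use A F.lin_dist_below_2q1 in \<open>auto simp: F.lin_dist_def\<close>)
qed

lemma dist_bound_below_sum:
  assumes m: "m \<ge> 1"
  shows "dist_bound_below (Q m + Q (Suc m)) (delta m + delta (Suc m))"
proof -
  interpret F: convergent_frame "int (a m)" "int (a (Suc m))" "Q (m - 1)" "Q m" "Q (Suc m)"
    "delta m" "delta (Suc m)" "delta (Suc (Suc m))" by (rule frame_at[OF m])
  show ?thesis
    by (rule dist_bound_belowI[OF m]) (use F.lin_dist_below_q1_plus_q2 in \<open>auto simp: F.lin_dist_def\<close>)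
qed

lemma dist_bound_below_skew_next:
  assumes m: "m \<ge> 1" and A: "a m \<ge> 2" and B: "a (Suc m) = 1"
  shows "dist_bound_below (Q (Suc m) + 2 * Q m) (delta m + delta (Suc m))"
proof -
  interpret F: convergent_frame "int (a m)" "int (a (Suc m))" "Q (m - 1)" "Q m" "Q (Suc m)"
    "delta m" "delta (Suc m)" "delta (Suc (Suc m))" by (rule frame_at[OF m])
  show ?thesis
    by (rule dist_bound_belowI[OF m]) (use A B F.lin_dist_below_q2_plus_2q1 in \<open>auto simp: F.lin_dist_def\<close>)
qed

lemma dist_bound_below_sum_of_one:
  assumes m: "m \<ge> 1" and A: "a m = 1" and B: "a (Suc m) \<ge> 2"
  shows "dist_bound_below (Q m + Q (Suc m)) (delta m + 2 * delta (Suc m))"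
proof -
  interpret F: convergent_frame "int (a m)" "int (a (Suc m))" "Q (m - 1)" "Q m" "Q (Suc m)"
    "delta m" "delta (Suc m)" "delta (Suc (Suc m))" by (rule frame_at[OF m])
  show ?thesis
    by (rule dist_bound_belowI[OF m])
      (use A B F.lin_dist_below_q1_plus_q2_of_A1 in \<open>auto simp: F.lin_dist_def\<close>)
qed

lemma dist_bound_below_double_of_one:
  assumes m: "m \<ge> 1" and A: "a m = 1"
  shows "dist_bound_below (2 * Q m) (delta m + 2 * delta (Suc m))"
proof -
  interpret F: convergent_frame "int (a m)" "int (a (Suc m))" "Q (m - 1)" "Q m" "Q (Suc m)"
    "delta m" "delta (Suc m)" "delta (Suc (Suc m))" by (rule frame_at[OF m])
  show ?thesis
    by (rule dist_bound_belowI[OF m]) (use A F.lin_dist_below_2q1_of_A1 in \<open>auto simp: F.lin_dist_def\<close>)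
qed

lemma dist_bound_below_double_next:
  assumes m: "m \<ge> 1" and A: "a m = 1" and B: "a (Suc m) = 1"
  shows "dist_bound_below (2 * Q (Suc m)) (2 * delta m)"
proof -
  interpret F: convergent_frame "int (a m)" "int (a (Suc m))" "Q (m - 1)" "Q m" "Q (Suc m)"
    "delta m" "delta (Suc m)" "delta (Suc (Suc m))" by (rule frame_at[OF m])
  show ?thesis
    by (rule dist_bound_belowI[OF m]) (use A B F.lin_dist_below_2q2 in \<open>auto simp: F.lin_dist_def\<close>)
qed

lemma dist_bound_below_skew:
  assumes m: "m \<ge> 1" and A: "a m = 1"
  shows "dist_bound_below (Q (Suc m) + Q (m - 1)) (2 * delta m)"
proof -
  interpret F: convergent_frame "int (a m)" "int (a (Suc m))" "Q (m - 1)" "Q m" "Q (Suc m)"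
    "delta m" "delta (Suc m)" "delta (Suc (Suc m))" by (rule frame_at[OF m])
  show ?thesis
    by (rule dist_bound_belowI[OF m]) (use A F.lin_dist_below_q2_plus_q0 in \<open>auto simp: F.lin_dist_def\<close>)
qed

end

section \<open>Records\<close>

context irrational_cf
begin

text \<open>The candidates for records, written as pairs \<open>(p, q)\<close>; in the paper's indexing their
  denominators are \<open>q\<^sub>n\<^sub>-\<^sub>1 + q\<^sub>n\<^sub>-\<^sub>2\<close>, \<open>2 q\<^sub>n\<^sub>-\<^sub>1\<close>, \<open>q\<^sub>n - q\<^sub>n\<^sub>-\<^sub>1\<close> and \<open>q\<^sub>n\<^sub>-\<^sub>1 + 2 q\<^sub>n\<^sub>-\<^sub>2\<close>.\<close>
definition "sum_pt n = (P n + P (n - 1), Q n + Q (n - 1))"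
definition "double_pt n = (2 * P n, 2 * Q n)"
definition "diff_pt n = (P (Suc n) - P n, Q (Suc n) - Q n)"
definition "skew_pt n = (P n + 2 * P (n - 1), Q n + 2 * Q (n - 1))"

lemma snd_pts:
  "snd (sum_pt n) = Q n + Q (n - 1)" "snd (double_pt n) = 2 * Q n"
  "snd (diff_pt n) = Q (Suc n) - Q n" "snd (skew_pt n) = Q n + 2 * Q (n - 1)"
  by (simp_all add: sum_pt_def double_pt_def diff_pt_def skew_pt_def)

lemma approx_dist_lin:
  "approx_dist (x * P i + y * P j, x * Q i + y * Q j) = \<bar>of_int x * eps i + of_int y * eps j\<bar>"
  by (simp add: approx_dist_def eps_def algebra_simps)

lemma approx_dist_sum_pt:
  assumes "n \<ge> 1"
  shows "approx_dist (sum_pt n) = delta (n - 1) - delta n"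
proof -
  obtain k where n: "n = Suc k" using assms by (cases n) auto
  have "approx_dist (sum_pt n) = \<bar>of_int 1 * eps (Suc k) + of_int 1 * eps k\<bar>"
    using approx_dist_lin[of 1 "Suc k" 1 k] by (simp add: sum_pt_def n)
  also have "\<dots> = \<bar>(-1) ^ Suc k * (delta k - delta (Suc k))\<bar>"
    by (simp add: eps_eq_sign_delta algebra_simps)
  also have "\<dots> = delta k - delta (Suc k)" using delta_Suc_less[of k] by (simp add: abs_mult)
  finally show ?thesis using n by simp
qed

lemma approx_dist_double_pt: "approx_dist (double_pt j) = 2 * delta j"
  using approx_dist_lin[of 2 j 0 j] by (simp add: double_pt_def delta_def abs_mult)

lemma approx_dist_diff_pt: "approx_dist (diff_pt n) = delta n + delta (Suc n)"
proof -
  have "approx_dist (diff_pt n) = \<bar>of_int 1 * eps (Suc n) + of_int (-1) * eps n\<bar>"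
    using approx_dist_lin[of 1 "Suc n" "-1" n] by (simp add: diff_pt_def)
  also have "\<dots> = \<bar>(-1) ^ n * (delta n + delta (Suc n))\<bar>" by (simp add: eps_eq_sign_delta algebra_simps)
  also have "\<dots> = delta n + delta (Suc n)" using delta_pos[of n] delta_pos[of "Suc n"] by (simp add: abs_mult)
  finally show ?thesis .
qed

lemma approx_dist_skew_pt:
  assumes n: "n \<ge> 1" and A: "a n = 1"
  shows "approx_dist (skew_pt n) = delta n + 2 * delta (Suc n)"
proof -
  obtain k where n: "n = Suc k" using n by (cases n) auto
  have "approx_dist (skew_pt n) = \<bar>of_int 1 * eps (Suc k) + of_int 2 * eps k\<bar>"
    using approx_dist_lin[of 1 "Suc k" 2 k] by (simp add: skew_pt_def n)
  also have "\<dots> = \<bar>(-1) ^ Suc k * (2 * delta k - delta (Suc k))\<bar>" by (simp add: eps_eq_sign_delta algebra_simps)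
  also have "\<dots> = 2 * delta k - delta (Suc k)" using delta_Suc_less[of k] delta_pos[of k] by (simp add: abs_mult)
  finally show ?thesis using delta_rec[of k] A n by simp
qed

lemma nonconvergent_between: "Q j < q \<Longrightarrow> q < Q (Suc j) \<Longrightarrow> nonconvergent p q"
  unfolding nonconvergent_def using Q_not_between by blast

lemma nonconvergent_denom_1: "p \<noteq> 0 \<Longrightarrow> (a 1 = 1 \<Longrightarrow> p \<noteq> 1) \<Longrightarrow> nonconvergent p 1"
  unfolding nonconvergent_def
proof (intro allI notI)
  fix n assume h: "p \<noteq> 0" "a 1 = 1 \<Longrightarrow> p \<noteq> 1" "(p, 1) = (P (Suc n), Q (Suc n))"
  then have "Suc n = 1 \<or> (Suc n = 2 \<and> a 1 = 1)" by (intro Q_eq_1_cases) simp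
  then show False using h by (auto simp: numeral_eq_Suc)
qed

lemma admissible_double_pt:
  assumes "j \<ge> 1"
  shows "admissible (double_pt j)"
proof -
  have "nonconvergent (2 * P j) (2 * Q j)"
    unfolding nonconvergent_def
  proof (intro allI notI)
    fix n assume "(2 * P j, 2 * Q j) = (P (Suc n), Q (Suc n))"
    then have "P (Suc n) = 2 * P j" "Q (Suc n) = 2 * Q j" by auto
    then have "(-1) ^ n = 2 * (P n * Q j - P j * Q n)"
      using convergent_det[of n] by (simp add: algebra_simps)
    moreover have "(-1::int) ^ n = 1 \<or> (-1::int) ^ n = -1" by (cases "even n") auto
    ultimately show False by presburger
  qed
  moreover have "2 * Q j \<ge> 1" using Q_pos[OF assms] by simp
  ultimately show ?thesis by (simp add: admissible_def double_pt_def)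
qed

lemma admissible_sum_pt:
  assumes n: "n \<ge> 1" and A: "a n \<ge> 2"
  shows "admissible (sum_pt n)"
proof (cases "n = 1")
  case True
  then have "sum_pt n = (1, 1)" by (simp add: sum_pt_def)
  moreover have "nonconvergent 1 1" using A True by (intro nonconvergent_denom_1) auto
  ultimately show ?thesis by (simp add: admissible_def)
next
  case False
  have q0: "Q (n - 1) \<ge> 1" using Q_pos[of "n - 1"] n False by simp
  have qn: "Q n \<ge> 1" using Q_pos[of n] n by simp
  have "int (a n) * Q n \<ge> 2 * Q n" using A qn by (intro mult_right_mono) auto
  then have "Q n < Q n + Q (n - 1)" "Q n + Q (n - 1) < Q (Suc n)" using Q_rec[OF n] q0 qn by simp_all
  then have "nonconvergent (P n + P (n - 1)) (Q n + Q (n - 1))" by (rule nonconvergent_between)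
  then show ?thesis using q0 qn by (simp add: admissible_def sum_pt_def)
qed

lemma admissible_diff_pt:
  assumes n: "n \<ge> 1" and A: "a n \<ge> 2"
  shows "admissible (diff_pt n)"
proof (cases "n = 1")
  case True
  show ?thesis
  proof (cases "a 1 = 2")
    case True2: True
    then have "diff_pt n = (1, 1)" using True by (simp add: diff_pt_def)
    moreover have "nonconvergent 1 1" using True2 by (intro nonconvergent_denom_1) auto
    ultimately show ?thesis by (simp add: admissible_def)
  next
    case False
    then have a3: "a 1 \<ge> 3" using A True by simp
    have "diff_pt n = (1, int (a 1) - 1)" using True by (simp add: diff_pt_def)
    moreover have "nonconvergent 1 (int (a 1) - 1)"
      by (rule nonconvergent_between[of 1]) (use a3 in \<open>simp_all add: numeral_eq_Suc\<close>)
    ultimately show ?thesis using a3 by (simp add: admissible_def)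
  qed
next
  case False
  have q0: "Q (n - 1) \<ge> 1" using Q_pos[of "n - 1"] n False by simp
  have qn: "Q n \<ge> 1" using Q_pos[of n] n by simp
  have "int (a n) * Q n \<ge> 2 * Q n" using A qn by (intro mult_right_mono) auto
  then have lt: "Q n < Q (Suc n) - Q n" using Q_rec[OF n] q0 by simp
  moreover have "Q (Suc n) - Q n < Q (Suc n)" using qn by simp
  ultimately have "nonconvergent (P (Suc n) - P n) (Q (Suc n) - Q n)" by (rule nonconvergent_between)
  then show ?thesis using lt qn by (simp add: admissible_def diff_pt_def)
qed

lemma admissible_skew_pt:
  assumes n: "n \<ge> 1" and A: "a n = 1" and B: "n = 1 \<or> a (n - 1) \<ge> 2 \<or> a (Suc n) \<ge> 2"
  shows "admissible (skew_pt n)"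
proof (cases "n = 1")
  case True
  then have "skew_pt n = (2, 1)" by (simp add: skew_pt_def)
  moreover have "nonconvergent 2 1" by (intro nonconvergent_denom_1) auto
  ultimately show ?thesis by (simp add: admissible_def)
next
  case False
  then have n2: "n \<ge> 2" using n by auto
  have q0: "Q (n - 1) \<ge> 1" using Q_pos[of "n - 1"] n2 by simp
  have qn: "Q n \<ge> 1" using Q_pos[of n] n by simp
  have r1: "Q (Suc n) = Q n + Q (n - 1)" using Q_rec[OF n] A by simp
  have r3: "Q (Suc (Suc n)) = int (a (Suc n)) * Q (Suc n) + Q n" by simp
  have "Q n + 2 * Q (n - 1) < Q (Suc (Suc n))"
  proof (cases "a (n - 1) \<ge> 2")
    case True
    have "int (a (n - 1)) * Q (n - 1) \<ge> 2 * Q (n - 1)" using True q0 by (intro mult_right_mono) auto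
    then have qq: "Q n \<ge> 2 * Q (n - 1)" using Q_rec[of "n - 1"] n2 qs_nonneg[of a "n - 2"]
      by (simp add: Suc_diff_Suc numeral_2_eq_2)
    have "int (a (Suc n)) * Q (Suc n) \<ge> 1 * Q (Suc n)"
      by (rule mult_right_mono) (use a_pos[of "Suc n"] qs_nonneg[of a "Suc n"] in auto)
    then show ?thesis using r1 r3 qq q0 by linarith
  next
    case False
    then have "a (Suc n) \<ge> 2" using B n2 by auto
    then have "int (a (Suc n)) * Q (Suc n) \<ge> 2 * Q (Suc n)"
      using qs_nonneg[of a "Suc n"] by (intro mult_right_mono) auto
    then show ?thesis using r1 r3 q0 qn Q_mono[of "n - 1" n] by linarith
  qed
  moreover have "Q (Suc n) < Q n + 2 * Q (n - 1)" using r1 q0 by simp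
  ultimately have "nonconvergent (P n + 2 * P (n - 1)) (Q n + 2 * Q (n - 1))"
    by (intro nonconvergent_between)
  then show ?thesis using q0 qn by (simp add: admissible_def skew_pt_def)
qed

lemma dist_bound_below_eq: "dist_bound_below T E \<Longrightarrow> T = T' \<Longrightarrow> E = E' \<Longrightarrow> dist_bound_below T' E'"
  by simp

lemma next_record_sum_double:
  assumes n: "n \<ge> 1" and A: "a n \<ge> 3"
  shows "next_record (sum_pt n) (double_pt n)"
proof -
  have r: "delta (n - 1) = of_nat (a n) * delta n + delta (Suc n)" by (rule delta_rec'[OF n])
  have "of_nat (a n) * delta n \<ge> of_nat 3 * delta n" using A delta_pos[of n] by (intro mult_right_mono) auto
  then have d: "2 * delta n < delta (n - 1) - delta n" using r delta_pos[of "Suc n"] by simp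
  have l: "dist_bound_below (2 * Q n) (delta (n - 1) - delta n)"
    by (rule dist_bound_below_eq[OF dist_bound_below_double[OF n]]) (use A r in \<open>auto simp: algebra_simps\<close>)
  show ?thesis unfolding next_record_def snd_pts approx_dist_sum_pt[OF n] approx_dist_double_pt
    using Q_mono[of "n - 1" n] d l by simp
qed

lemma next_record_double_diff:
  assumes n: "n \<ge> 1" and A: "a n \<ge> 3"
  shows "next_record (double_pt n) (diff_pt n)"
proof -
  have "int (a n) * Q n \<ge> int 3 * Q n" using A qs_nonneg[of a n] by (intro mult_right_mono) auto
  then have "2 * Q n \<le> Q (Suc n) - Q n" using Q_rec[OF n] qs_nonneg[of a "n - 1"] by simp
  then show ?thesis unfolding next_record_def snd_pts approx_dist_diff_pt approx_dist_double_pt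
    using delta_Suc_less[of n] dist_bound_below_diff[OF n] by simp
qed

lemma next_record_diff_sum:
  assumes n: "n \<ge> 1"
  shows "next_record (diff_pt n) (sum_pt (Suc n))"
proof -
  have "dist_bound_below (Q (Suc n) + Q n) (delta n + delta (Suc n))"
    by (rule dist_bound_below_eq[OF dist_bound_below_sum[OF n]]) auto
  then show ?thesis
    unfolding next_record_def snd_pts approx_dist_diff_pt approx_dist_sum_pt[of "Suc n", simplified]
    using qs_nonneg[of a n] delta_pos[of "Suc n"] by simp
qed

lemma next_record_diff_diff:
  assumes n: "n \<ge> 1" and A: "a (Suc n) = 2"
  shows "next_record (diff_pt n) (diff_pt (Suc n))"
proof -
  have s: "Q (Suc (Suc n)) - Q (Suc n) = Q (Suc n) + Q n" using A by simp
  have "dist_bound_below (Q (Suc n) + Q n) (delta n + delta (Suc n))"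
    by (rule dist_bound_below_eq[OF dist_bound_below_sum[OF n]]) auto
  then show ?thesis unfolding next_record_def snd_pts approx_dist_diff_pt s
    using qs_nonneg[of a n] delta_Suc_less[of n] delta_Suc_less[of "Suc n"] by simp
qed

lemma next_record_diff_skew:
  assumes n: "n \<ge> 1" and A: "a n \<ge> 2" and B: "a (Suc n) = 1"
  shows "next_record (diff_pt n) (skew_pt (Suc n))"
proof -
  have "delta n = delta (Suc n) + delta (Suc (Suc n))" using delta_rec[of n] B by simp
  then show ?thesis
    unfolding next_record_def snd_pts approx_dist_diff_pt approx_dist_skew_pt[of "Suc n", OF _ B, simplified]
    using qs_nonneg[of a n] delta_Suc_less[of "Suc n"] dist_bound_below_skew_next[OF n A B] by simp
qed

lemma next_record_skew_sum:
  assumes n: "n \<ge> 1" and A: "a n = 1" and B: "a (Suc n) \<ge> 2"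
  shows "next_record (skew_pt n) (sum_pt (Suc n))"
proof -
  have "Q (Suc n) = Q n + Q (n - 1)" using Q_rec[OF n] A by simp
  moreover have "dist_bound_below (Q (Suc n) + Q n) (delta n + 2 * delta (Suc n))"
    by (rule dist_bound_below_eq[OF dist_bound_below_sum_of_one[OF n A B]]) auto
  ultimately show ?thesis
    unfolding next_record_def snd_pts approx_dist_skew_pt[OF n A] approx_dist_sum_pt[of "Suc n", simplified]
    using Q_mono[of "n - 1" n] delta_pos[of "Suc n"] by simp
qed

lemma next_record_skew_diff:
  assumes n: "n \<ge> 1" and A: "a n = 1" and B: "a (Suc n) = 2"
  shows "next_record (skew_pt n) (diff_pt (Suc n))"
proof -
  have "Q (Suc n) = Q n + Q (n - 1)" using Q_rec[OF n] A by simp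
  moreover have s: "Q (Suc (Suc n)) - Q (Suc n) = Q (Suc n) + Q n" using B by simp
  moreover have "dist_bound_below (Q (Suc n) + Q n) (delta n + 2 * delta (Suc n))"
    by (rule dist_bound_below_eq[OF dist_bound_below_sum_of_one[OF n A]]) (use B in auto)
  ultimately show ?thesis unfolding next_record_def snd_pts approx_dist_skew_pt[OF n A] approx_dist_diff_pt s
    using Q_mono[of "n - 1" n] delta_Suc_less[of n] delta_Suc_less[of "Suc n"] delta_pos[of n] by simp
qed

lemma next_record_skew_double:
  assumes n: "n \<ge> 1" and A: "a n = 1" and B: "a (Suc n) = 1" and C: "n = 1 \<or> a (n - 1) \<ge> 2"
  shows "next_record (skew_pt n) (double_pt n)"
proof -
  have "2 * Q (n - 1) \<le> Q n"
  proof (cases "n = 1")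
    case False
    then have n2: "n - 1 \<ge> 1" "a (n - 1) \<ge> 2" using n C by auto
    have "int (a (n - 1)) * Q (n - 1) \<ge> int 2 * Q (n - 1)"
      using n2(2) qs_nonneg[of a "n - 1"] by (intro mult_right_mono) auto
    then show ?thesis using Q_rec[OF n2(1)] qs_nonneg[of a "n - 1 - 1"] False n by simp
  qed simp
  moreover have "delta n = delta (Suc n) + delta (Suc (Suc n))" using delta_rec[of n] B by simp
  ultimately show ?thesis unfolding next_record_def snd_pts approx_dist_skew_pt[OF n A] approx_dist_double_pt
    using delta_Suc_less[of "Suc n"] dist_bound_below_double_of_one[OF n A] by simp
qed

lemma next_record_double_double:
  assumes "j \<ge> 1" "a j = 1" "a (Suc j) = 1"
  shows "next_record (double_pt j) (double_pt (Suc j))"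
  unfolding next_record_def snd_pts approx_dist_double_pt
  using Q_le_Suc[of j] delta_Suc_less[of j] dist_bound_below_double_next[OF assms] by simp

lemma next_record_double_skew:
  assumes j: "j \<ge> 2" and A: "a j = 1" and A': "a (j - 1) = 1" and B: "a (Suc j) \<ge> 2"
  shows "next_record (double_pt j) (skew_pt j)"
proof -
  have j1: "j \<ge> 1" "j - 1 \<ge> 1" using j by auto
  have "Q j = Q (j - 1) + Q (j - 1 - 1)" using Q_rec[OF j1(2)] A' j by simp
  then have m: "2 * Q j \<le> Q j + 2 * Q (j - 1)" using Q_mono[of "j - 1 - 1" "j - 1"] by simp
  have "of_nat (a (Suc j)) * delta (Suc j) \<ge> of_nat 2 * delta (Suc j)"
    using B delta_pos[of "Suc j"] by (intro mult_right_mono) auto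
  then have d: "delta j + 2 * delta (Suc j) < 2 * delta j"
    using delta_rec[of j] delta_pos[of "Suc (Suc j)"] by linarith
  have l: "dist_bound_below (Q j + 2 * Q (j - 1)) (2 * delta j)"
    by (rule dist_bound_below_eq[OF dist_bound_below_skew[OF j1(1) A]]) (use Q_rec[OF j1(1)] A in auto)
  show ?thesis unfolding next_record_def snd_pts approx_dist_skew_pt[OF j1(1) A] approx_dist_double_pt
    using m d l by simp
qed

end

section \<open>Records are the discontinuities of \<^const>\<open>psi2\<close>\<close>

context irrational_cf
begin

definition approx_set :: "real \<Rightarrow> real set" where
  "approx_set t = {\<bar>of_int q * \<alpha> - of_int p\<bar> | p q. 1 \<le> q \<and> of_int q \<le> t \<and> nonconvergent p q}"

lemma psi2_eq_Inf: "psi2 \<alpha> t = Inf (approx_set t)"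
proof -
  have "(\<forall>n::nat. (p, q) \<noteq> (cf_p \<alpha> (int n), cf_q \<alpha> (int n))) \<longleftrightarrow> nonconvergent p q" for p q
  proof -
    have "nat (int n + 1) = Suc n" for n by simp
    then show ?thesis by (simp add: cf_p_def cf_q_def nonconvergent_def)
  qed
  then show ?thesis unfolding psi2_def approx_set_def by simp
qed

lemma approx_set_bdd_below: "bdd_below (approx_set t)"
  unfolding approx_set_def by (rule bdd_belowI[of _ 0]) auto

lemma approx_dist_in_approx_set: "admissible w \<Longrightarrow> of_int (snd w) \<le> t \<Longrightarrow> approx_dist w \<in> approx_set t"
  unfolding approx_set_def admissible_def approx_dist_def by (cases w) auto

lemma psi2_le_approx_dist: "admissible w \<Longrightarrow> of_int (snd w) \<le> t \<Longrightarrow> psi2 \<alpha> t \<le> approx_dist w"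
  unfolding psi2_eq_Inf by (rule cInf_lower[OF approx_dist_in_approx_set approx_set_bdd_below])

end

locale record_sequence = irrational_cf +
  fixes W :: "nat \<Rightarrow> int \<times> int"
  assumes admissible_W: "admissible (W i)"
    and next_record_W: "next_record (W i) (W (Suc i))"
    and denom_W_0: "snd (W 0) = 1"
    and denom_W_unbounded: "\<exists>i. snd (W i) \<ge> K"
begin

lemma denom_W_mono: "mono (snd \<circ> W)"
  by (rule mono_iff_le_Suc[THEN iffD2]) (use next_record_W in \<open>auto simp: next_record_def\<close>)

lemma denom_W_pos: "snd (W i) \<ge> 1"
  using admissible_W[of i] by (simp add: admissible_def)

lemma psi2_drops_at_record:
  assumes t: "t \<ge> 2" and i: "snd (W i) = int t"
  shows "psi2 \<alpha> (real t) < psi2 \<alpha> (real t - 1)"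
proof -
  define j where "j = (LEAST j. snd (W j) = int t)"
  have Wj: "snd (W j) = int t" unfolding j_def by (rule LeastI[of _ i]) (use i in auto)
  have "j \<noteq> 0" using Wj denom_W_0 t by (intro notI) simp
  then obtain k where jk: "j = Suc k" by (cases j) auto
  have "snd (W k) \<noteq> int t" using jk not_less_Least[of k "\<lambda>j. snd (W j) = int t"] by (simp add: j_def)
  moreover have rec: "next_record (W k) (W j)" using next_record_W jk by simp
  ultimately have Wk: "snd (W k) < int t" using Wj by (simp add: next_record_def)
  have "approx_dist (W k) \<le> x" if x: "x \<in> approx_set (real t - 1)" for x
  proof -
    obtain p q where "x = \<bar>of_int q * \<alpha> - of_int p\<bar>" "1 \<le> q" "of_int q \<le> real t - 1" "nonconvergent p q"
      using x unfolding approx_set_def by blast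
    then show ?thesis using rec Wj unfolding next_record_def dist_bound_below_def by auto
  qed
  moreover have "approx_set (real t - 1) \<noteq> {}"
    using approx_dist_in_approx_set[OF admissible_W[of k], of "real t - 1"] Wk by auto
  ultimately have "approx_dist (W k) \<le> psi2 \<alpha> (real t - 1)"
    unfolding psi2_eq_Inf by (intro cInf_greatest)
  moreover have "psi2 \<alpha> (real t) \<le> approx_dist (W j)"
    using psi2_le_approx_dist[OF admissible_W] Wj by simp
  ultimately show ?thesis using rec unfolding next_record_def by simp
qed

text \<open>Between two consecutive records every approximation with a new denominator is worse than
  the earlier record, so \<^const>\<open>psi2\<close> cannot drop there.\<close>
lemma psi2_no_drop_off_records:
  assumes t: "t \<ge> 2" and nr: "int t \<notin> range (snd \<circ> W)"
  shows "psi2 \<alpha> (real t - 1) \<le> psi2 \<alpha> (real t)"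
proof -
  obtain i where "snd (W i) \<ge> int t" using denom_W_unbounded by auto
  define J where "J = (LEAST j. snd (W j) \<ge> int t)"
  have WJ: "snd (W J) \<ge> int t" unfolding J_def by (rule LeastI[of _ i]) fact
  have "J \<noteq> 0" using WJ denom_W_0 t nr by (intro notI) (auto intro: range_eqI[of _ _ 0])
  then obtain k where Jk: "J = Suc k" by (cases J) auto
  have Wk: "snd (W k) < int t" using Jk not_less_Least[of k "\<lambda>j. snd (W j) \<ge> int t"] by (simp add: J_def)
  have "snd (W J) \<noteq> int t" using nr by (metis comp_apply rangeI)
  then have WJ': "snd (W J) > int t" using WJ by simp
  have rec: "next_record (W k) (W J)" using next_record_W Jk by simp
  have "psi2 \<alpha> (real t - 1) \<le> x" if x: "x \<in> approx_set (real t)" for x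
  proof -
    obtain p q where x_eq: "x = \<bar>of_int q * \<alpha> - of_int p\<bar>" and q: "1 \<le> q" "of_int q \<le> real t" "nonconvergent p q"
      using x unfolding approx_set_def by blast
    show ?thesis
    proof (cases "q \<le> int t - 1")
      case True
      then have "x \<in> approx_set (real t - 1)" using q x_eq unfolding approx_set_def by force
      then show ?thesis unfolding psi2_eq_Inf by (rule cInf_lower[OF _ approx_set_bdd_below])
    next
      case False
      then have "approx_dist (W k) \<le> x"
        using rec q WJ' unfolding next_record_def dist_bound_below_def x_eq by auto
      moreover have "psi2 \<alpha> (real t - 1) \<le> approx_dist (W k)"
        using psi2_le_approx_dist[OF admissible_W] Wk by simp
      ultimately show ?thesis by simp
    qed
  qed
  moreover have "approx_set (real t) \<noteq> {}"
    using approx_dist_in_approx_set[OF admissible_W[of k], of "real t"] Wk by auto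
  ultimately show ?thesis unfolding psi2_eq_Inf[of "real t"] by (intro cInf_greatest)
qed

lemma frakQ_eq_denoms: "frakQ \<alpha> = {t. int t \<in> range (snd \<circ> W)}"
proof (intro set_eqI iffI)
  fix t assume t: "t \<in> frakQ \<alpha>"
  show "t \<in> {t. int t \<in> range (snd \<circ> W)}"
  proof (cases "t \<ge> 2")
    case True
    then show ?thesis using t psi2_no_drop_off_records unfolding frakQ_def by fastforce
  next
    case False
    then have "t = 1" using t unfolding frakQ_def by auto
    then show ?thesis using denom_W_0 by (auto intro: range_eqI[of _ _ 0])
  qed
next
  fix t assume "t \<in> {t. int t \<in> range (snd \<circ> W)}"
  then obtain i where i: "snd (W i) = int t" by auto
  then have "t \<ge> 1" using denom_W_pos[of i] by simp
  then show "t \<in> frakQ \<alpha>"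
    using psi2_drops_at_record[OF _ i] unfolding frakQ_def by (cases "t = 1") auto
qed

end

section \<open>The blocks\<close>

context irrational_cf
begin

text \<open>The blocks of the theorem as lists of points \<open>(p, q)\<close>; \<open>pt_block n\<close> is empty unless \<open>n\<close>
  starts a block, and a final infinite run of ones starting at \<open>n\<close> gives \<open>pt_tail n\<close>.\<close>
definition run_length :: "nat \<Rightarrow> nat" where "run_length n = (LEAST r. a (n + r) \<noteq> 1)"
definition run_end :: "nat \<Rightarrow> nat" where "run_end n = n + run_length n - 1"
definition run_start :: "nat \<Rightarrow> bool" where
  "run_start n \<longleftrightarrow> a n = 1 \<and> a (n - 1) \<noteq> 1 \<and> (\<exists>j>n. a j \<noteq> 1)"

definition pt_block :: "nat \<Rightarrow> (int \<times> int) list" where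
  "pt_block n =
    (if n = 0 then []
     else if 3 \<le> a n then [sum_pt n, double_pt n, diff_pt n]
     else if a n = 2 then [diff_pt n]
     else if run_start n then
       (if run_length n = 1 then [skew_pt n]
        else [skew_pt n] @ map (\<lambda>k. double_pt (n + k)) [0..<run_length n] @ [skew_pt (run_end n)])
     else [])"

definition block_head :: "nat \<Rightarrow> int \<times> int" where
  "block_head n = (if 3 \<le> a n then sum_pt n else if a n = 2 then diff_pt n else skew_pt n)"

definition block_last :: "nat \<Rightarrow> int \<times> int" where
  "block_last n = (if 2 \<le> a n then diff_pt n else skew_pt (run_end n))"

definition pt_prefix :: "nat \<Rightarrow> (int \<times> int) list" where
  "pt_prefix N = concat (map pt_block [1..<Suc N])"

definition pt_tail :: "nat \<Rightarrow> nat \<Rightarrow> int \<times> int" where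
  "pt_tail n k = (if k = 0 then skew_pt n else double_pt (n + k - 1))"

lemma cf_q_eq_Q: "cf_q \<alpha> z = Q (nat (z + 1))"
  by (simp add: cf_q_def)

lemma cf_q_int_minus_2: "n \<ge> 1 \<Longrightarrow> cf_q \<alpha> (int n - 2) = Q (n - 1)"
  and cf_q_int_minus_1: "cf_q \<alpha> (int n - 1) = Q n"
  and cf_q_int: "cf_q \<alpha> (int n) = Q (Suc n)"
  and cf_q_int_plus: "cf_q \<alpha> (int n - 1 + int k) = Q (n + k)"
  and cf_q_int_sum_minus_3: "n + r \<ge> 2 \<Longrightarrow> cf_q \<alpha> (int n + int r - 3) = Q (n + r - 2)"
  and cf_q_int_sum_minus_2: "n + r \<ge> 1 \<Longrightarrow> cf_q \<alpha> (int n + int r - 2) = Q (n + r - 1)"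
  unfolding cf_q_eq_Q by (rule arg_cong[of _ _ Q]; arith)+

lemma run_length_props:
  assumes "a n = 1" "\<exists>j>n. a j \<noteq> 1"
  shows "run_length n \<ge> 1" "a (n + run_length n) \<noteq> 1" "\<And>k. k < run_length n \<Longrightarrow> a (n + k) = 1"
proof -
  obtain j where j: "j > n" "a j \<noteq> 1" using assms by blast
  then have "a (n + (j - n)) \<noteq> 1" by simp
  then show ne: "a (n + run_length n) \<noteq> 1" unfolding run_length_def by (rule LeastI)
  show "\<And>k. k < run_length n \<Longrightarrow> a (n + k) = 1" unfolding run_length_def using not_less_Least by blast
  show "run_length n \<ge> 1" using ne assms(1) by (cases "run_length n") auto
qed

lemma blk_eq_map_snd: "blk \<alpha> n = map snd (pt_block n)"
proof (cases "n = 0 \<or> 2 \<le> a n")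
  case True
  then show ?thesis
    by (auto simp: blk_def pt_block_def Let_def snd_pts cf_q_int_minus_2 cf_q_int_minus_1 cf_q_int)
next
  case False
  then have n: "n \<ge> 1" and a1: "a n = 1" using a_pos[of n] by auto
  show ?thesis
  proof (cases "run_start n")
    case True
    then have st: "a (n - 1) \<noteq> 1" "\<exists>j>n. a j \<noteq> 1" unfolding run_start_def by auto
    have b: "blk \<alpha> n = (let r = run_length n in if r = 1 then [2 * Q (n - 1) + Q n]
        else [2 * Q (n - 1) + Q n] @ map (\<lambda>k. 2 * Q (n + k)) [0..<r]
         @ [2 * cf_q \<alpha> (int n + int r - 3) + cf_q \<alpha> (int n + int r - 2)])"
      using n a1 st unfolding blk_def Let_def run_length_def[symmetric]
      by (simp add: cf_q_int_minus_2 cf_q_int_minus_1 cf_q_int_plus)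
    show ?thesis
    proof (cases "run_length n = 1")
      case True
      then show ?thesis using b a1 \<open>run_start n\<close> n by (simp add: pt_block_def snd_pts)
    next
      case False
      then have r2: "n + run_length n \<ge> 2" using run_length_props(1)[OF a1 st(2)] n by simp
      show ?thesis using b a1 \<open>run_start n\<close> n False
        by (simp add: pt_block_def snd_pts cf_q_int_sum_minus_3[OF r2] cf_q_int_sum_minus_2 Let_def run_end_def)
           (simp add: algebra_simps numeral_2_eq_2)
    qed
  qed (use n a1 in \<open>auto simp: blk_def pt_block_def Let_def run_start_def\<close>)
qed

lemma blk_prefix_eq_map_snd: "blk_prefix \<alpha> N = map snd (pt_prefix N)"
proof -
  have "blk \<alpha> = (\<lambda>n. map snd (pt_block n))" using blk_eq_map_snd by auto
  then show ?thesis by (simp add: blk_prefix_def pt_prefix_def map_concat comp_def)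
qed

lemma inf_blk_eq_snd: "n \<ge> 1 \<Longrightarrow> inf_blk \<alpha> n k = snd (pt_tail n k)"
  by (cases "k = 0")
    (auto simp: inf_blk_def pt_tail_def snd_pts cf_q_int_minus_2 cf_q_int_minus_1 cf_q_int_sum_minus_2)

lemma pt_block_nonempty_iff: "n \<ge> 1 \<Longrightarrow> pt_block n \<noteq> [] \<longleftrightarrow> 2 \<le> a n \<or> run_start n"
  using a_pos[of n] by (auto simp: pt_block_def run_start_def)

lemma prev_of_run_start:
  assumes "n \<ge> 1" "a (n - 1) \<noteq> 1"
  shows "n = 1 \<or> a (n - 1) \<ge> 2"
proof (cases "n = 1")
  case False
  then have "a (n - 1) \<ge> 1" using assms(1) by (intro a_pos) simp
  then show ?thesis using assms(2) by simp
qed simp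

lemma run_end_props:
  assumes n: "n \<ge> 1" and st: "run_start n" and r2: "run_length n \<ge> 2"
  shows "run_end n \<ge> 2" "a (run_end n) = 1" "a (run_end n - 1) = 1" "a (Suc (run_end n)) \<ge> 2"
    "a (Suc n) = 1"
proof -
  have "a n = 1" "\<exists>j>n. a j \<noteq> 1" using st unfolding run_start_def by auto
  note rl = run_length_props[OF this]
  show "run_end n \<ge> 2" using n r2 by (simp add: run_end_def)
  show "a (run_end n) = 1" using rl(3)[of "run_length n - 1"] r2 by (simp add: run_end_def)
  show "a (run_end n - 1) = 1"
    using rl(3)[of "run_length n - 2"] r2 by (simp add: run_end_def numeral_2_eq_2)
  have "a (Suc (run_end n)) \<noteq> 1" using rl(2) r2 by (simp add: run_end_def)
  then show "a (Suc (run_end n)) \<ge> 2" using a_pos[of "Suc (run_end n)"] by simp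
  show "a (Suc n) = 1" using rl(3)[of 1] r2 by simp
qed

lemma successively_next_record_doubles:
  assumes "n \<ge> 1" "\<And>k. k < r \<Longrightarrow> a (n + k) = 1"
  shows "successively next_record (map (\<lambda>k. double_pt (n + k)) [0..<r])"
  unfolding successively_conv_nth
proof (intro allI impI)
  fix i assume "Suc i < length (map (\<lambda>k. double_pt (n + k)) [0..<r])"
  then have "Suc i < r" by simp
  then show "next_record (map (\<lambda>k. double_pt (n + k)) [0..<r] ! i) (map (\<lambda>k. double_pt (n + k)) [0..<r] ! Suc i)"
    using next_record_double_double[of "n + i"] assms(1) assms(2)[of i] assms(2)[of "Suc i"] by simp
qed

lemma pt_block_long_run:
  assumes n: "n \<ge> 1" and st: "run_start n" and r2: "run_length n \<ge> 2"
  shows "successively next_record (pt_block n) \<and> (\<forall>w\<in>set (pt_block n). admissible w)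
    \<and> hd (pt_block n) = skew_pt n \<and> last (pt_block n) = skew_pt (run_end n)"
proof -
  have st': "a n = 1" "a (n - 1) \<noteq> 1" "\<exists>j>n. a j \<noteq> 1" using st unfolding run_start_def by auto
  note e = run_end_props[OF n st r2]
  define M where "M = map (\<lambda>k. double_pt (n + k)) [0..<run_length n]"
  have blk: "pt_block n = [skew_pt n] @ M @ [skew_pt (run_end n)]"
    using st n r2 st'(1) by (simp add: pt_block_def M_def)
  have prev: "n = 1 \<or> a (n - 1) \<ge> 2" using prev_of_run_start[OF n st'(2)] .
  have "successively next_record M"
    unfolding M_def using n run_length_props(3)[OF st'(1,3)] by (rule successively_next_record_doubles)
  moreover have "M \<noteq> []" "hd M = double_pt n" "last M = double_pt (run_end n)"
    using r2 n by (simp_all add: M_def hd_map last_map run_end_def)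
  moreover have "next_record (skew_pt n) (double_pt n)"
    by (rule next_record_skew_double[OF n st'(1) e(5) prev])
  moreover have "next_record (double_pt (run_end n)) (skew_pt (run_end n))"
    by (rule next_record_double_skew[OF e(1-4)])
  ultimately have "successively next_record (pt_block n)"
    unfolding blk by (simp add: successively_append_iff successively_Cons)
  moreover have "\<forall>w\<in>set (pt_block n). admissible w"
    unfolding blk M_def using admissible_skew_pt[OF n st'(1)] admissible_skew_pt[of "run_end n"] prev e
      admissible_double_pt n by auto
  ultimately show ?thesis by (simp add: blk)
qed

lemma pt_block_props:
  assumes n: "n \<ge> 1" and ne: "pt_block n \<noteq> []"
  shows "successively next_record (pt_block n) \<and> (\<forall>w\<in>set (pt_block n). admissible w)
    \<and> hd (pt_block n) = block_head n \<and> last (pt_block n) = block_last n"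
proof -
  consider "3 \<le> a n" | "a n = 2" | "a n < 2" by linarith
  then show ?thesis
  proof cases
    case 1
    then show ?thesis
      using next_record_sum_double[OF n] next_record_double_diff[OF n] admissible_sum_pt[OF n]
        admissible_double_pt[OF n] admissible_diff_pt[OF n] n
      by (simp add: pt_block_def block_head_def block_last_def)
  next
    case 2
    then show ?thesis using admissible_diff_pt[OF n] n by (simp add: pt_block_def block_head_def block_last_def)
  next
    case 3
    then have "a n = 1" "run_start n" using a_pos[OF n] pt_block_nonempty_iff[OF n] ne by simp_all
    then have "n = 1 \<or> a (n - 1) \<ge> 2" using prev_of_run_start[OF n] by (simp add: run_start_def)
    then have "admissible (skew_pt n)" using admissible_skew_pt[OF n \<open>a n = 1\<close>] by blast
    moreover have "run_length n \<ge> 1"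
      using run_length_props(1) \<open>a n = 1\<close> \<open>run_start n\<close> by (simp add: run_start_def)
    ultimately show ?thesis
      using \<open>a n = 1\<close> \<open>run_start n\<close> n pt_block_long_run[OF n \<open>run_start n\<close>]
      by (cases "run_length n = 1") (auto simp: pt_block_def block_head_def block_last_def run_end_def)
  qed
qed

lemma next_record_block_boundary:
  assumes N: "N \<ge> 1" and ne: "pt_block (Suc N) \<noteq> []"
  shows "next_record (block_last N) (block_head (Suc N))"
proof (cases "2 \<le> a N")
  case True
  consider "3 \<le> a (Suc N)" | "a (Suc N) = 2" | "a (Suc N) = 1" using a_pos[of "Suc N"] by linarith
  then show ?thesis
  proof cases
    case 1
    then show ?thesis using next_record_diff_sum[OF N] True by (simp add: block_last_def block_head_def)
  next
    case 2
    then show ?thesis using next_record_diff_diff[OF N] True by (simp add: block_last_def block_head_def)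
  next
    case 3
    then show ?thesis using next_record_diff_skew[OF N True] True by (simp add: block_last_def block_head_def)
  qed
next
  case False
  then have aN: "a N = 1" using a_pos[OF N] by simp
  then have a2: "a (Suc N) \<ge> 2" using pt_block_nonempty_iff[of "Suc N"] ne by (simp add: run_start_def)
  then have "\<exists>j>N. a j \<noteq> 1" by (intro exI[of _ "Suc N"]) simp
  note rl = run_length_props[OF aN this]
  have "\<not> 1 < run_length N" using rl(3)[of 1] a2 by auto
  then have "run_length N = 1" using rl(1) by simp
  then have last: "block_last N = skew_pt N" using aN by (simp add: block_last_def run_end_def)
  consider "3 \<le> a (Suc N)" | "a (Suc N) = 2" using a2 by linarith
  then show ?thesis
  proof cases
    case 1
    then show ?thesis using next_record_skew_sum[OF N aN a2] last by (simp add: block_head_def)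
  next
    case 2
    then show ?thesis using next_record_skew_diff[OF N aN] last by (simp add: block_head_def)
  qed
qed


lemma pt_prefix_0: "pt_prefix 0 = []"
  by (simp add: pt_prefix_def)

lemma pt_prefix_Suc: "pt_prefix (Suc N) = pt_prefix N @ pt_block (Suc N)"
  by (simp add: pt_prefix_def)

lemma pt_prefix_append: "N \<le> N' \<Longrightarrow> \<exists>ys. pt_prefix N' = pt_prefix N @ ys"
  by (induction N' rule: dec_induct) (auto simp: pt_prefix_Suc)

lemma run_end_Suc:
  assumes "a N = 1" "a (Suc N) = 1" and "\<exists>j>Suc N. a j \<noteq> 1"
  shows "run_end (Suc N) = run_end N"
proof -
  obtain j where "j > Suc N" "a j \<noteq> 1" using assms(3) by blast
  then have "a (N + (j - N)) \<noteq> 1" by simp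
  then have "run_length N = Suc (LEAST m. a (N + Suc m) \<noteq> 1)"
    unfolding run_length_def by (rule Least_Suc) (use assms(1) in simp)
  then show ?thesis by (simp add: run_end_def run_length_def)
qed

definition not_in_ones_tail :: "nat \<Rightarrow> bool" where
  "not_in_ones_tail N \<longleftrightarrow> 2 \<le> a N \<or> (\<exists>j>N. a j \<noteq> 1)"

lemma not_in_ones_tail_le: "not_in_ones_tail N \<Longrightarrow> M \<le> N \<Longrightarrow> not_in_ones_tail M"
  unfolding not_in_ones_tail_def by (cases "M = N") (auto intro: le_neq_trans)

lemma pt_prefix_props:
  assumes "N \<ge> 1" "not_in_ones_tail N"
  shows "pt_prefix N \<noteq> [] \<and> hd (pt_prefix N) = block_head 1 \<and> last (pt_prefix N) = block_last N
    \<and> successively next_record (pt_prefix N) \<and> (\<forall>w\<in>set (pt_prefix N). admissible w)"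
  using assms
proof (induction N)
  case (Suc N)
  show ?case
  proof (cases "N = 0")
    case True
    have "pt_block 1 \<noteq> []"
    proof (cases "2 \<le> a 1")
      case False
      then have "a 1 = 1" using a_pos[of 1] by simp
      moreover have "\<exists>j>1. a j \<noteq> 1" using Suc.prems True False by (simp add: not_in_ones_tail_def)
      ultimately show ?thesis using pt_block_nonempty_iff[of 1] by (simp add: run_start_def a_0)
    qed (simp add: pt_block_nonempty_iff)
    then show ?thesis using pt_block_props[of 1] True by (simp add: pt_prefix_def)
  next
    case False
    then have N1: "N \<ge> 1" by simp
    note IH = Suc.IH[OF N1 not_in_ones_tail_le[OF Suc.prems(2)]]
    show ?thesis
    proof (cases "pt_block (Suc N) = []")
      case True
      then have "\<not> 2 \<le> a (Suc N)" "\<not> run_start (Suc N)" using pt_block_nonempty_iff[of "Suc N"] by auto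
      then have a1: "a (Suc N) = 1" and ex: "\<exists>j>Suc N. a j \<noteq> 1" and aN: "a N = 1"
        using a_pos[of "Suc N"] Suc.prems(2) unfolding not_in_ones_tail_def run_start_def by auto
      have "block_last (Suc N) = block_last N"
        using run_end_Suc[OF aN a1 ex] aN a1 by (simp add: block_last_def)
      then show ?thesis using IH True by (simp add: pt_prefix_Suc)
    next
      case False
      note B = pt_block_props[OF _ False]
      have "next_record (block_last N) (block_head (Suc N))" by (rule next_record_block_boundary[OF N1 False])
      then have "successively next_record (pt_prefix N @ pt_block (Suc N))"
        using IH B False by (simp add: successively_append_iff)
      then show ?thesis using IH B False by (auto simp: pt_prefix_Suc)
    qed
  qed
qed simp

lemma denom_block_head_1: "snd (block_head 1) = 1"
  using a_pos[of 1] by (auto simp: block_head_def snd_pts numeral_eq_Suc)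

lemma denom_block_last_ge:
  assumes N: "N \<ge> 1" and h: "not_in_ones_tail N"
  shows "snd (block_last N) \<ge> Q N"
proof (cases "2 \<le> a N")
  case True
  have "int (a N) * Q N \<ge> int 2 * Q N" using True qs_nonneg[of a N] by (intro mult_right_mono) auto
  then show ?thesis using True Q_rec[OF N] qs_nonneg[of a "N - 1"] by (simp add: block_last_def snd_pts)
next
  case False
  then have aN: "a N = 1" using a_pos[OF N] by simp
  have "\<exists>j>N. a j \<noteq> 1" using h False unfolding not_in_ones_tail_def by simp
  then have "run_length N \<ge> 1" by (rule run_length_props(1)[OF aN])
  then have "run_end N \<ge> N" by (simp add: run_end_def)
  then have "Q (run_end N) \<ge> Q N" by (rule Q_mono)
  then show ?thesis using False qs_nonneg[of a "run_end N - 1"] by (simp add: block_last_def snd_pts)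
qed

definition ones_tail :: bool where
  "ones_tail \<longleftrightarrow> (\<exists>n\<ge>1. a (n - 1) \<noteq> 1 \<and> (\<forall>j\<ge>n. a j = 1))"

definition tail_start :: nat where
  "tail_start = (THE n. n \<ge> 1 \<and> a (n - 1) \<noteq> 1 \<and> (\<forall>j\<ge>n. a j = 1))"

definition record_seq :: "nat \<Rightarrow> int \<times> int" where
  "record_seq i =
    (if ones_tail then
       (let L = pt_prefix (tail_start - 1) in if i < length L then L ! i else pt_tail tail_start (i - length L))
     else pt_prefix (LEAST N. i < length (pt_prefix N)) ! i)"

lemma tail_start_props:
  assumes "ones_tail"
  shows "tail_start \<ge> 1" "a (tail_start - 1) \<noteq> 1" "\<And>j. j \<ge> tail_start \<Longrightarrow> a j = 1"
proof -
  let ?P = "\<lambda>n. n \<ge> 1 \<and> a (n - 1) \<noteq> 1 \<and> (\<forall>j\<ge>n. a j = 1)"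
  have unique: "m = n" if Pn: "?P n" and Pm: "?P m" for n m
  proof (rule ccontr)
    assume "m \<noteq> n"
    then consider "n < m" | "m < n" by linarith
    then show False
    proof cases
      case 1
      then have "a (m - 1) = 1" using Pn by simp
      then show False using Pm by simp
    next
      case 2
      then have "a (n - 1) = 1" using Pm by simp
      then show False using Pn by simp
    qed
  qed
  moreover have "\<exists>n. ?P n" using assms unfolding ones_tail_def by blast
  ultimately have "\<exists>!n. ?P n" by blast
  then have "?P tail_start" unfolding tail_start_def by (rule theI')
  then show "tail_start \<ge> 1" "a (tail_start - 1) \<noteq> 1" "\<And>j. j \<ge> tail_start \<Longrightarrow> a j = 1" by auto
qed


lemma exists_non_one_after:
  assumes "\<not> ones_tail"
  shows "\<exists>j>N. a j \<noteq> 1"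
proof (rule ccontr)
  assume "\<not> (\<exists>j>N. a j \<noteq> 1)"
  then have tail: "\<forall>j\<ge>Suc N. a j = 1" by auto
  define n where "n = (LEAST n. \<forall>j\<ge>n. a j = 1)"
  have all: "\<forall>j\<ge>n. a j = 1" unfolding n_def by (rule LeastI[of _ "Suc N"]) (rule tail)
  then have n1: "n \<ge> 1" using a_0 by (cases n) auto
  have "a (n - 1) \<noteq> 1"
  proof
    assume prev: "a (n - 1) = 1"
    have "\<forall>j\<ge>n - 1. a j = 1"
    proof (intro allI impI)
      fix j assume "j \<ge> n - 1"
      then have "j = n - 1 \<or> j \<ge> n" by linarith
      then show "a j = 1" using all prev by auto
    qed
    then have "n \<le> n - 1" unfolding n_def by (rule Least_le)
    then show False using n1 by simp
  qed
  then show False using assms all n1 unfolding ones_tail_def by blast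
qed

lemma not_in_ones_tail_if_finite_runs: "\<not> ones_tail \<Longrightarrow> not_in_ones_tail N"
  unfolding not_in_ones_tail_def using exists_non_one_after by blast

lemma length_pt_prefix_unbounded:
  assumes "\<not> ones_tail"
  shows "\<exists>N. i < length (pt_prefix N)"
proof (induction i)
  case 0
  have "pt_prefix 1 \<noteq> []" using pt_prefix_props[of 1] not_in_ones_tail_if_finite_runs[OF assms] by simp
  then show ?case by (intro exI[of _ 1]) simp
next
  case (Suc i)
  then obtain N where N: "i < length (pt_prefix N)" by blast
  obtain j where j: "j > N" "a j \<noteq> 1" using exists_non_one_after[OF assms] by blast
  then have "pt_block j \<noteq> []" using pt_block_nonempty_iff[of j] a_pos[of j] by simp
  moreover have "N \<le> j - 1" using j by simp
  then obtain ys where "pt_prefix (j - 1) = pt_prefix N @ ys" using pt_prefix_append by blast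
  moreover have "pt_prefix j = pt_prefix (j - 1) @ pt_block j" using pt_prefix_Suc[of "j - 1"] j by simp
  ultimately have "length (pt_prefix j) > length (pt_prefix N)" by simp
  then show ?case using N by (intro exI[of _ j]) simp
qed

lemma record_seq_finite_runs:
  assumes "\<not> ones_tail" "i < length (pt_prefix N)"
  shows "record_seq i = pt_prefix N ! i"
proof -
  define N0 where "N0 = (LEAST N. i < length (pt_prefix N))"
  have i0: "i < length (pt_prefix N0)" unfolding N0_def by (rule LeastI[of _ N]) (rule assms(2))
  have "N0 \<le> N" unfolding N0_def by (rule Least_le) (rule assms(2))
  then obtain ys where "pt_prefix N = pt_prefix N0 @ ys" using pt_prefix_append by blast
  then show ?thesis using assms(1) i0 by (simp add: record_seq_def N0_def[symmetric] nth_append)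
qed

lemma record_sequence_finite_runs:
  assumes fin: "\<not> ones_tail"
  shows "record_sequence \<alpha> record_seq"
proof
  note props = pt_prefix_props[OF _ not_in_ones_tail_if_finite_runs[OF fin]]
  fix i
  obtain N where N: "Suc i < length (pt_prefix N)" using length_pt_prefix_unbounded[OF fin] by blast
  then have "N \<ge> 1" by (cases N) (auto simp: pt_prefix_0)
  moreover have "record_seq i = pt_prefix N ! i" "record_seq (Suc i) = pt_prefix N ! Suc i"
    using record_seq_finite_runs[OF fin] N by auto
  ultimately show "admissible (record_seq i)" "next_record (record_seq i) (record_seq (Suc i))"
    using props N successively_nth[of next_record "pt_prefix N" i] by auto
next
  note props = pt_prefix_props[OF _ not_in_ones_tail_if_finite_runs[OF fin]]
  have "record_seq 0 = pt_prefix 1 ! 0"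
    using record_seq_finite_runs[OF fin, of 0 1] props[of 1] by simp
  also have "\<dots> = block_head 1" using props[of 1] by (simp add: hd_conv_nth[symmetric])
  finally show "snd (record_seq 0) = 1" using denom_block_head_1 by simp
next
  note props = pt_prefix_props[OF _ not_in_ones_tail_if_finite_runs[OF fin]]
  fix K :: int
  define M where "M = nat K + 2"
  have M: "M \<ge> 1" by (simp add: M_def)
  have ne: "pt_prefix M \<noteq> []" using props[OF M] by simp
  then have "record_seq (length (pt_prefix M) - 1) = pt_prefix M ! (length (pt_prefix M) - 1)"
    by (intro record_seq_finite_runs[OF fin]) simp
  also have "\<dots> = last (pt_prefix M)" using ne by (simp add: last_conv_nth)
  finally have "record_seq (length (pt_prefix M) - 1) = last (pt_prefix M)" .
  then have "snd (record_seq (length (pt_prefix M) - 1)) \<ge> Q M"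
    using props[OF M] denom_block_last_ge[OF M not_in_ones_tail_if_finite_runs[OF fin]] by simp
  moreover have "Q M \<ge> int M - 1" by (rule Q_ge_index)
  ultimately have "snd (record_seq (length (pt_prefix M) - 1)) \<ge> K" unfolding M_def by linarith
  then show "\<exists>i. snd (record_seq i) \<ge> K" by blast
qed

lemma pt_tail_props:
  assumes tail: "ones_tail"
  shows "admissible (pt_tail tail_start k)" "next_record (pt_tail tail_start k) (pt_tail tail_start (Suc k))"
proof -
  note T = tail_start_props[OF tail]
  have ones: "a tail_start = 1" "a (Suc tail_start) = 1" using T(3) by auto
  have prev: "tail_start = 1 \<or> a (tail_start - 1) \<ge> 2" using prev_of_run_start[OF T(1,2)] .
  show "admissible (pt_tail tail_start k)"
    using admissible_skew_pt[OF T(1) ones(1)] prev admissible_double_pt[of "tail_start + k - 1"] T(1)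
    by (cases "k = 0") (auto simp: pt_tail_def)
  show "next_record (pt_tail tail_start k) (pt_tail tail_start (Suc k))"
  proof (cases "k = 0")
    case True
    then show ?thesis using next_record_skew_double[OF T(1) ones prev] by (simp add: pt_tail_def)
  next
    case False
    then have "next_record (double_pt (tail_start + k - 1)) (double_pt (Suc (tail_start + k - 1)))"
      using T by (intro next_record_double_double) auto
    moreover have "Suc (tail_start + k - 1) = tail_start + Suc k - 1" using T(1) by simp
    ultimately show ?thesis using False by (simp add: pt_tail_def)
  qed
qed

lemma prefix_before_tail:
  assumes tail: "ones_tail" and "tail_start \<ge> 2"
  defines "L \<equiv> pt_prefix (tail_start - 1)"
  shows "L \<noteq> [] \<and> hd L = block_head 1 \<and> last L = diff_pt (tail_start - 1)
    \<and> successively next_record L \<and> (\<forall>w\<in>set L. admissible w)"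
proof -
  note T = tail_start_props[OF tail]
  have "tail_start - 1 \<ge> 1" using assms by simp
  moreover from this have "a (tail_start - 1) \<ge> 2" using a_pos T(2) by fastforce
  ultimately show ?thesis
    using pt_prefix_props[of "tail_start - 1"] unfolding L_def not_in_ones_tail_def
    by (simp add: block_last_def)
qed

lemma record_seq_ones_tail:
  assumes "ones_tail"
  defines "L \<equiv> pt_prefix (tail_start - 1)"
  shows "record_seq j = (if j < length L then L ! j else pt_tail tail_start (j - length L))"
  using assms by (simp add: record_seq_def Let_def)

lemma prefix_before_tail_empty_iff:
  "ones_tail \<Longrightarrow> pt_prefix (tail_start - 1) = [] \<longleftrightarrow> tail_start = 1"
  using tail_start_props(1) prefix_before_tail by (cases "tail_start = 1") (auto simp: pt_prefix_0)

lemma next_record_record_seq_ones_tail: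
  assumes tail: "ones_tail"
  shows "next_record (record_seq i) (record_seq (Suc i))"
proof -
  note T = tail_start_props[OF tail]
  define L where "L = pt_prefix (tail_start - 1)"
  note W = record_seq_ones_tail[OF tail, folded L_def]
  consider "Suc i < length L" | "Suc i = length L" | "i \<ge> length L" by linarith
  then show ?thesis
  proof cases
    case 1
    then have "L \<noteq> []" by auto
    then have "successively next_record L"
      using prefix_before_tail[OF tail] prefix_before_tail_empty_iff[OF tail] T(1) by (simp add: L_def)
    then show ?thesis using 1 W[of i] W[of "Suc i"] successively_nth[of next_record L i] by simp
  next
    case 2
    then have "L \<noteq> []" and "i = length L - 1" by auto
    then have ts: "tail_start \<ge> 2" using prefix_before_tail_empty_iff[OF tail] T(1) by (simp add: L_def)
    have "record_seq i = last L" using W[of i] \<open>L \<noteq> []\<close> \<open>i = length L - 1\<close> by (simp add: last_conv_nth)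
    then have "record_seq i = diff_pt (tail_start - 1)" using prefix_before_tail[OF tail ts] by (simp add: L_def)
    moreover have "record_seq (Suc i) = skew_pt (Suc (tail_start - 1))"
      using W[of "Suc i"] 2 T(1) by (simp add: pt_tail_def)
    moreover have "a (tail_start - 1) \<ge> 1" using ts by (intro a_pos) simp
    then have "next_record (diff_pt (tail_start - 1)) (skew_pt (Suc (tail_start - 1)))"
      using T ts by (intro next_record_diff_skew) auto
    ultimately show ?thesis by simp
  next
    case 3
    then have "Suc i - length L = Suc (i - length L)" by simp
    then show ?thesis using W[of i] W[of "Suc i"] 3 pt_tail_props(2)[OF tail] by simp
  qed
qed

lemma record_sequence_ones_tail:
  assumes tail: "ones_tail"
  shows "record_sequence \<alpha> record_seq"
proof
  note T = tail_start_props[OF tail]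
  define L where "L = pt_prefix (tail_start - 1)"
  note W = record_seq_ones_tail[OF tail, folded L_def]
  have L: "hd L = block_head 1 \<and> (\<forall>w\<in>set L. admissible w)" if "L \<noteq> []"
    using prefix_before_tail[OF tail] that prefix_before_tail_empty_iff[OF tail] T(1) by (simp add: L_def)
  {
    fix i
    show "admissible (record_seq i)"
    proof (cases "i < length L")
      case True
      then have "L ! i \<in> set L" "L \<noteq> []" by auto
      then show ?thesis using W[of i] L True by simp
    qed (use W[of i] pt_tail_props(1)[OF tail] in simp)
  }
  show "next_record (record_seq i) (record_seq (Suc i))" for i
    using tail by (rule next_record_record_seq_ones_tail)
  show "snd (record_seq 0) = 1"
  proof (cases "L = []")
    case True
    then show ?thesis
      using W[of 0] prefix_before_tail_empty_iff[OF tail] by (simp add: L_def pt_tail_def snd_pts)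
  next
    case False
    then show ?thesis using W[of 0] L denom_block_head_1 by (simp add: hd_conv_nth)
  qed
  fix K :: int
  define k where "k = nat K + 2"
  have "record_seq (length L + k) = double_pt (tail_start + k - 1)"
    using W[of "length L + k"] by (simp add: pt_tail_def k_def)
  then have "snd (record_seq (length L + k)) = 2 * Q (tail_start + k - 1)" by (simp add: snd_pts)
  moreover have "Q (tail_start + k - 1) \<ge> int (tail_start + k - 1) - 1" by (rule Q_ge_index)
  moreover have "int (tail_start + k - 1) - 1 \<ge> K" using T(1) by (simp add: k_def)
  ultimately have "snd (record_seq (length L + k)) \<ge> K"
    using qs_nonneg[of a "tail_start + k - 1"] by linarith
  then show "\<exists>i. snd (record_seq i) \<ge> K" by blast
qed

lemma record_sequence_record_seq: "record_sequence \<alpha> record_seq"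
  using record_sequence_finite_runs record_sequence_ones_tail by blast

lemma blockseq_eq_denom: "blockseq \<alpha> i = snd (record_seq i)"
proof (cases ones_tail)
  case True
  then show ?thesis
    using tail_start_props(1)[OF True]
    unfolding blockseq_def Let_def ones_tail_def[symmetric] tail_start_def[symmetric]
    by (simp add: record_seq_def blk_prefix_eq_map_snd inf_blk_eq_snd)
next
  case False
  obtain N where "i < length (pt_prefix N)" using length_pt_prefix_unbounded[OF False] by blast
  then have "i < length (pt_prefix (LEAST N. i < length (pt_prefix N)))" by (rule LeastI)
  then show ?thesis
    using False unfolding blockseq_def Let_def ones_tail_def[symmetric]
    by (simp add: record_seq_def blk_prefix_eq_map_snd)
qed

end

theorem mainTheorem1:
  fixes \<alpha> :: real
  assumes "0 < \<alpha>" and "\<alpha> < 1" and "\<alpha> \<notin> \<rat>"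
  shows "infinite (first_occ (blockseq \<alpha>)) \<and> infinite (frakQ \<alpha>) \<and>
         (\<forall>k. blockseq \<alpha> (enumerate (first_occ (blockseq \<alpha>)) k) = int (enumerate (frakQ \<alpha>) k))"
proof -
  interpret irrational_cf \<alpha> using assms by unfold_locales
  interpret record_sequence \<alpha> record_seq by (rule record_sequence_record_seq)
  have "blockseq \<alpha> = snd \<circ> record_seq" using blockseq_eq_denom by auto
  then show ?thesis
    using denom_W_mono denom_W_unbounded denom_W_pos frakQ_eq_denoms
    by (intro enumerate_first_occ) auto
qed
end
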